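(* Let $\pi$ be the policy induced by Dual Gradient Descent with Proxy Assignments with stepsize $\eta=\Theta(\sqrt{K/T})$. Then for every $k\in[K]$, $\mathbb E\big[\widetilde{\textsc{Reg}}_k[\omega_k]\big]=O(\sqrt{T/K})$.
   Context: Model. There are $m$ resources and $n$ arrival types; type $j$ has cost vector $c_j\in\mathbb R^m$ and allowed resources $\mathcal S_j\subseteq[m]$, $\max_{i,j}|c_{ji}|<\infty$. The horizon has $T$ periods partitioned into $K=\Theta(1)$ epochs ($T$ a multiple of $K$), epoch $k$ being $\mathcal T_k=\{(k-1)T/K+1,\dots,kT/K\}$. In period $t$ one arrival of type $j^t$ occurs, $j^1,\dots,j^T$ i.i.d. with $\mathbb P(j^t=j)=p_j$, $p$ not depending on $T$ and unknown to the decision-maker; $\omega_k=(j^t)_{t\in\mathcal T_k}$, $\Lambda_j(t_1:t_2)=\sum_{t_1<\tau\le t_2}\mathbf 1\{j^\tau=j\}$. Feasible decisions: $\mathcal X^t=\{x\in\{0,1\}^m:\sum_ix_i\le1,\ x_i=0\ \forall i\notin\mathcal S_{j^t}\}$. $Z^\pi_{ji}(t)$ counts type-$j$ arrivals assigned to $i$ in periods $1..t$. Each epoch $k$ and resource $i$ has a target $\rho_{ki}\in[0,1]$ and convex $L$-Lipschitz $g_{ki}:[0,1]\to\mathbb R_{\ge0}$ with $g_{ki}(\rho_{ki})=0$. Expectations over arrivals and algorithm decisions; $O(\cdot)$ as $T\to\infty$. Dual Gradient Descent with Proxy Assignments (stepsize $\eta$, initial $\mu^1\in\mathbb R^{K\times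 m}$): for $t=1,\dots,T$, with $k$ the epoch of $t$: if $t=(k-1)T/K+1$ set $\mu^t_{k'}=\mu^1_{k'}$ for $k'\ge k$; observe $j=j^t$; for every $k'\ge k$ compute $\tilde x^t_{k'}\in\arg\min_{x\in\mathcal X^t}\sum_ix_i(c_{ji}-\mu^t_{k'i})$; implement $x^t=\tilde x^t_k$; compute $a^t\in\arg\min_{a\in[0,1]^{(K+1-k)\times m}}\sum_{k'\ge k}k'\sum_ig_{k'i}\big(\frac{\sum_{t'\le(k-1)T/K}x^{t'}_i}{k'T/K}+\sum_{k''=k}^{k'}\frac{a_{k''i}}{k'}\big)+\sum_{k'\ge k}\sum_i\mu^t_{k'i}a_{k'i}$; update $\mu^{t+1}_{k'}=\mu^t_{k'}+\eta(a^t_{k'}-\tilde x^t_{k'})$ for $k'\ge k$. Proxy quantities. For $k\le k_1\le k_2\le K$: $\widetilde Z^\pi_{ji,k}\big(\frac{(k_1-1)T}K:\frac{k_2T}K\big)=\sum_{t\in\mathcal T_k}\sum_{k''=k_1}^{k_2}\tilde x^t_{k''i}\mathbf 1\{j^t=j\}$, $\widetilde Z^\pi_{i,k}=\sum_j\widetilde Z^\pi_{ji,k}$. Cumulative proxy cost: $\widetilde V^\pi_k[\omega_k\mid z]=\sum_{j,i}c_{ji}\widetilde Z^\pi_{ji,k}\big(\frac{(k-1)T}K:T\big)+\frac TK\sum_{k'\ge k}\sum_ik'g_{k'i}\Big(\frac{z_i+\widetilde Z^\pi_{i,k}((k-1)T/K:k'T/K)}{k'T/K}\Big)$. Proxy offline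 optimum $\widetilde V^{\textsc{off}}_k[\omega_k\mid z]$: the minimum over nonnegative integers $Z^{(k')}_{ji}$ ($k'\ge k$), zero for $i\notin\mathcal S_j$, with $\sum_iZ^{(k')}_{ji}\le\Lambda_j\big(\frac{(k-1)T}K:\frac{kT}K\big)$ for all $j,k'\ge k$, of $\sum_{j,i}c_{ji}\sum_{k'\ge k}Z^{(k')}_{ji}+\frac TK\sum_{k'\ge k}\sum_ik'g_{k'i}\Big(\frac{z_i+\sum_j\sum_{k''=k}^{k'}Z^{(k'')}_{ji}}{k'T/K}\Big)$. Proxy regret: $\widetilde{\textsc{Reg}}_k[\omega_k]=\widetilde V^\pi_k[\omega_k\mid Z^\pi((k-1)T/K)]-\widetilde V^{\textsc{off}}_k[\omega_k\mid Z^\pi((k-1)T/K)]$ (with $Z^\pi(0)=0$). *)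

theory Defs
  imports "HOL-Analysis.Analysis" "HOL-Probability.Probability"
begin

(* Epochs are indexed 1..K, periods 1..T, resources 0..m-1, arrival types 0..n-1.
   A realisation of the arrivals is a function J :: nat => nat with J t = j^t. *)

definition epoch_of :: "nat \<Rightarrow> nat \<Rightarrow> nat \<Rightarrow> nat" where
  "epoch_of K T t = (t - 1) div (T div K) + 1"

definition epoch_periods :: "nat \<Rightarrow> nat \<Rightarrow> nat \<Rightarrow> nat set" where
  "epoch_periods K T k = {(k - 1) * (T div K) + 1 .. k * (T div K)}"

definition feasX :: "nat \<Rightarrow> (nat \<Rightarrow> nat set) \<Rightarrow> nat \<Rightarrow> (nat \<Rightarrow> real) set" where
  "feasX m S j = {x. (\<forall>i. x i = 0 \<or> x i = 1) \<and> (\<Sum>i<m. x i) \<le> 1 \<and> (\<forall>i. i \<notin> S j \<longrightarrow> x i = 0)}"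

(* the box [0,1]^{epochs x resources} over which a^t is chosen *)
definition unit_box :: "(nat \<Rightarrow> nat \<Rightarrow> real) set" where
  "unit_box = {a. \<forall>k i. 0 \<le> a k i \<and> a k i \<le> 1}"

(* objective minimised by a^t in epoch k; U0 i = sum of x^{t'}_i over t' <= (k-1)T/K *)
definition a_objective ::
  "nat \<Rightarrow> nat \<Rightarrow> nat \<Rightarrow> (nat \<Rightarrow> nat \<Rightarrow> real \<Rightarrow> real) \<Rightarrow> nat \<Rightarrow> (nat \<Rightarrow> real)
   \<Rightarrow> (nat \<Rightarrow> nat \<Rightarrow> real) \<Rightarrow> (nat \<Rightarrow> nat \<Rightarrow> real) \<Rightarrow> real" where
  "a_objective m K T g k U0 mu a =
     (\<Sum>k'=k..K. real k' * (\<Sum>i<m. g k' i (U0 i / (real k' * real T / real K)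
                                             + (\<Sum>k''=k..k'. a k'' i) / real k')))
     + (\<Sum>k'=k..K. \<Sum>i<m. mu k' i * a k' i)"

(* Tie-breaking rules: selX t h k' j r must be a minimiser of sum_i x_i r_i over X^t,
   selA t h F a minimiser of F over the box (whenever one exists).  Both may depend on the
   period t and on the history h = [j^1,...,j^t] (non-anticipating). *)
definition valid_selectors ::
  "nat \<Rightarrow> nat \<Rightarrow> (nat \<Rightarrow> nat set)
   \<Rightarrow> (nat \<Rightarrow> nat list \<Rightarrow> nat \<Rightarrow> nat \<Rightarrow> (nat \<Rightarrow> real) \<Rightarrow> (nat \<Rightarrow> real))
   \<Rightarrow> (nat \<Rightarrow> nat list \<Rightarrow> ((nat \<Rightarrow> nat \<Rightarrow> real) \<Rightarrow> real) \<Rightarrow> (nat \<Rightarrow> nat \<Rightarrow> real)) \<Rightarrow> bool" where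
  "valid_selectors m n S selX selA \<longleftrightarrow>
     (\<forall>t h k' j r. j < n \<longrightarrow>
        selX t h k' j r \<in> feasX m S j \<and>
        (\<forall>x\<in>feasX m S j. (\<Sum>i<m. selX t h k' j r i * r i) \<le> (\<Sum>i<m. x i * r i))) \<and>
     (\<forall>t h F. (\<exists>a\<in>unit_box. \<forall>b\<in>unit_box. F a \<le> F b) \<longrightarrow>
        selA t h F \<in> unit_box \<and> (\<forall>b\<in>unit_box. F (selA t h F) \<le> F b))"

(* Data computed in period tau from the state after period tau-1.
   State s = (mu, U, U0): dual variables after the last update, cumulative implemented usage,
   usage at the start of the current epoch.
   Result: (mu^tau after possible reset, U0, proxy decisions xt k', a^tau). *)
definition step_data ::
  "nat \<Rightarrow> nat \<Rightarrow> nat \<Rightarrow> (nat \<Rightarrow> nat \<Rightarrow> real) \<Rightarrow> (nat \<Rightarrow> nat \<Rightarrow> real \<Rightarrow> real)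
   \<Rightarrow> (nat \<Rightarrow> nat \<Rightarrow> real)
   \<Rightarrow> (nat \<Rightarrow> nat list \<Rightarrow> nat \<Rightarrow> nat \<Rightarrow> (nat \<Rightarrow> real) \<Rightarrow> (nat \<Rightarrow> real))
   \<Rightarrow> (nat \<Rightarrow> nat list \<Rightarrow> ((nat \<Rightarrow> nat \<Rightarrow> real) \<Rightarrow> real) \<Rightarrow> (nat \<Rightarrow> nat \<Rightarrow> real))
   \<Rightarrow> (nat \<Rightarrow> nat) \<Rightarrow> nat
   \<Rightarrow> (nat \<Rightarrow> nat \<Rightarrow> real) \<times> (nat \<Rightarrow> real) \<times> (nat \<Rightarrow> real)
   \<Rightarrow> (nat \<Rightarrow> nat \<Rightarrow> real) \<times> (nat \<Rightarrow> real) \<times> (nat \<Rightarrow> nat \<Rightarrow> real) \<times> (nat \<Rightarrow> nat \<Rightarrow> real)" where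
  "step_data m K T c g mu1 selX selA J tau s =
     (let (mu, U, U0) = s;
          k = epoch_of K T tau;
          start = (tau = (k - 1) * (T div K) + 1);
          mu' = (if start then (\<lambda>k' i. if k \<le> k' then mu1 k' i else mu k' i) else mu);
          U0' = (if start then U else U0);
          h = map J [1..<tau + 1];
          xt = (\<lambda>k'. selX tau h k' (J tau) (\<lambda>i. c (J tau) i - mu' k' i));
          a = selA tau h (a_objective m K T g k U0' mu')
      in (mu', U0', xt, a))"

fun dgd_state ::
  "nat \<Rightarrow> nat \<Rightarrow> nat \<Rightarrow> (nat \<Rightarrow> nat \<Rightarrow> real) \<Rightarrow> (nat \<Rightarrow> nat \<Rightarrow> real \<Rightarrow> real)
   \<Rightarrow> (nat \<Rightarrow> nat \<Rightarrow> real) \<Rightarrow> real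
   \<Rightarrow> (nat \<Rightarrow> nat list \<Rightarrow> nat \<Rightarrow> nat \<Rightarrow> (nat \<Rightarrow> real) \<Rightarrow> (nat \<Rightarrow> real))
   \<Rightarrow> (nat \<Rightarrow> nat list \<Rightarrow> ((nat \<Rightarrow> nat \<Rightarrow> real) \<Rightarrow> real) \<Rightarrow> (nat \<Rightarrow> nat \<Rightarrow> real))
   \<Rightarrow> (nat \<Rightarrow> nat) \<Rightarrow> nat
   \<Rightarrow> (nat \<Rightarrow> nat \<Rightarrow> real) \<times> (nat \<Rightarrow> real) \<times> (nat \<Rightarrow> real)" where
  "dgd_state m K T c g mu1 eta selX selA J 0 = (mu1, (\<lambda>i. 0), (\<lambda>i. 0))"
| "dgd_state m K T c g mu1 eta selX selA J (Suc t) =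
     (let (mu', U0', xt, a) = step_data m K T c g mu1 selX selA J (Suc t)
                                 (dgd_state m K T c g mu1 eta selX selA J t);
          k = epoch_of K T (Suc t);
          U = fst (snd (dgd_state m K T c g mu1 eta selX selA J t));
          mu'' = (\<lambda>k' i. if k \<le> k' then mu' k' i + eta * (a k' i - xt k' i) else mu' k' i)
      in (mu'', (\<lambda>i. U i + xt k i), U0'))"

definition proxy_x where
  "proxy_x m K T c g mu1 eta selX selA J t k' =
     fst (snd (snd (step_data m K T c g mu1 selX selA J t
                     (dgd_state m K T c g mu1 eta selX selA J (t - 1))))) k'"

definition impl_x where
  "impl_x m K T c g mu1 eta selX selA J t = proxy_x m K T c g mu1 eta selX selA J t (epoch_of K T t)"

definition usage where
  "usage m K T c g mu1 eta selX selA J t i = (\<Sum>t'=1..t. impl_x m K T c g mu1 eta selX selA J t' i)"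

definition proxy_Z where
  "proxy_Z m K T c g mu1 eta selX selA J k k1 k2 j i =
     (\<Sum>t\<in>epoch_periods K T k. \<Sum>k''=k1..k2.
        (if J t = j then proxy_x m K T c g mu1 eta selX selA J t k'' i else 0))"

definition proxy_V where
  "proxy_V m n K T c g mu1 eta selX selA J k z =
     (\<Sum>j<n. \<Sum>i<m. c j i * proxy_Z m K T c g mu1 eta selX selA J k k K j i)
     + real T / real K * (\<Sum>k'=k..K. \<Sum>i<m. real k' *
         g k' i ((z i + (\<Sum>j<n. proxy_Z m K T c g mu1 eta selX selA J k k k' j i))
                 / (real k' * real T / real K)))"

definition arrivals_in_epoch :: "nat \<Rightarrow> nat \<Rightarrow> (nat \<Rightarrow> nat) \<Rightarrow> nat \<Rightarrow> nat \<Rightarrow> nat" where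
  "arrivals_in_epoch K T J k j = card {t \<in> epoch_periods K T k. J t = j}"

definition offline_feasible where
  "offline_feasible m n K T S J k =
     {Z :: nat \<Rightarrow> nat \<Rightarrow> nat \<Rightarrow> nat.
        (\<forall>k' j i. Z k' j i \<noteq> 0 \<longrightarrow> k \<le> k' \<and> k' \<le> K \<and> j < n \<and> i \<in> S j) \<and>
        (\<forall>k'\<in>{k..K}. \<forall>j<n. (\<Sum>i<m. Z k' j i) \<le> arrivals_in_epoch K T J k j)}"

definition offline_obj where
  "offline_obj m n K T c g k z Z =
     (\<Sum>j<n. \<Sum>i<m. c j i * (\<Sum>k'=k..K. real (Z k' j i)))
     + real T / real K * (\<Sum>k'=k..K. \<Sum>i<m. real k' *
         g k' i ((z i + (\<Sum>j<n. \<Sum>k''=k..k'. real (Z k'' j i))) / (real k' * real T / real K)))"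

definition proxy_off where
  "proxy_off m n K T c S g J k z =
     Inf (offline_obj m n K T c g k z ` offline_feasible m n K T S J k)"

definition proxy_regret where
  "proxy_regret m n K T c S g mu1 eta selX selA J k =
     (let z = usage m K T c g mu1 eta selX selA J ((k - 1) * (T div K))
      in proxy_V m n K T c g mu1 eta selX selA J k z - proxy_off m n K T c S g J k z)"

definition expected_proxy_regret where
  "expected_proxy_regret m n K T c S g mu1 eta selX selA P k =
     measure_pmf.expectation (Pi_pmf {1..T} 0 (\<lambda>_. P))
       (\<lambda>J. proxy_regret m n K T c S g mu1 eta selX selA J k)"

end

theory Submission
  imports Defs
begin

text \<open>Fix an epoch \<open>k\<close>; the history before it determines the usage \<open>z\<close> at its start. For an
  arrival of type \<open>j\<close> let \<open>D(\<mu>, j)\<close> be the Lagrangian dual function of the proxy problem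
  restricted to that single arrival. Summed over the epoch at any fixed multiplier \<open>\<mu>\<close>, these
  values lower-bound the proxy offline optimum (weak duality). Conversely, Jensen's inequality for
  the convex costs \<open>g\<close> and one subgradient per cost bound the proxy cost of the algorithm by
  \<open>\<Sum>\<^sub>t D(\<mu>\<^sup>t, j\<^sup>t)\<close> plus the regret of the gradient steps on the duals against a fixed
  comparator, which is \<open>O(1/\<eta> + \<eta> T/K)\<close>. As \<open>\<mu>\<^sup>t\<close> is fixed before \<open>j\<^sup>t\<close> arrives,
  \<open>E D(\<mu>\<^sup>t, j\<^sup>t) \<le> sup\<^sub>\<mu> E D(\<mu>, j)\<close>, and this supremum is nearly attained by a multiplier
  depending on \<open>z\<close> alone, to which weak duality applies. With \<open>\<eta> = \<Theta>(\<surd>(K/T))\<close> the bound is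
  \<open>O(\<surd>(T/K))\<close>; it is nonnegative because the proxy decisions form a feasible offline solution.\<close>

lemma compact_unit_box: "compact unit_box"
proof -
  have "unit_box = Pi UNIV (\<lambda>_::nat. Pi UNIV (\<lambda>_::nat. {0..1::real}))"
    by (auto simp: unit_box_def Pi_iff)
  moreover have "compact (Pi UNIV (\<lambda>_::nat. {0..1::real}))"
    using compactin_PiE[of "\<lambda>_::nat. euclidean" UNIV "\<lambda>_. {0..1::real}"]
    by (simp add: euclidean_product_topology PiE_UNIV_domain compactin_euclidean_iff)
  then have "compact (Pi UNIV (\<lambda>_::nat. Pi UNIV (\<lambda>_::nat. {0..1::real})))"
    using compactin_PiE[of "\<lambda>_::nat. euclidean" UNIV "\<lambda>_. Pi UNIV (\<lambda>_::nat. {0..1::real})"]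
    by (simp add: euclidean_product_topology PiE_UNIV_domain compactin_euclidean_iff)
  ultimately show ?thesis by simp
qed

lemma continuous_on_entry: "continuous_on A (\<lambda>a::nat \<Rightarrow> nat \<Rightarrow> real. a k i)"
  by (rule continuous_on_subset[OF _ subset_UNIV],
      rule continuous_on_compose2[OF continuous_on_product_coordinates continuous_on_product_coordinates]) auto

lemma lipschitz_on_slope_abs_le:
  fixes f :: "real \<Rightarrow> real"
  assumes "L-lipschitz_on X f" "x \<in> X" "y \<in> X" "x \<noteq> y"
  shows "\<bar>(f x - f y) / (x - y)\<bar> \<le> L"
proof -
  have "\<bar>f x - f y\<bar> \<le> L * \<bar>x - y\<bar>" using lipschitz_onD[OF assms(1-3)] by (simp add: dist_real_def)
  then show ?thesis using assms(4) by (simp add: abs_divide divide_le_eq)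
qed

lemma convex_on_chord_slopes_le:
  fixes f :: "real \<Rightarrow> real"
  assumes "convex_on I f" "w \<in> I" "y \<in> I" "w < x" "x < y"
  shows "(f x - f w) / (x - w) \<le> (f y - f x) / (y - x)"
proof -
  have flip: "(f u - f v) / (u - v) = (f v - f u) / (v - u)" for u v
    by (metis minus_diff_eq minus_divide_divide)
  have "(f x - f w) / (x - w) = (f w - f x) / (w - x)" by (rule flip)
  also have "\<dots> \<le> (f w - f y) / (w - y)" using convex_on_slope_le(1)[OF assms] .
  also have "\<dots> \<le> (f x - f y) / (x - y)" using convex_on_slope_le(2)[OF assms] .
  also have "\<dots> = (f y - f x) / (y - x)" by (rule flip)
  finally show ?thesis .
qed

lemma convex_lipschitz_subgradient:
  fixes f :: "real \<Rightarrow> real"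
  assumes cv: "convex_on {a..b} f" and lip: "L-lipschitz_on {a..b} f" and x: "x \<in> {a..b}"
  shows "\<exists>d. \<bar>d\<bar> \<le> L \<and> (\<forall>y\<in>{a..b}. f x + d * (y - x) \<le> f y)"
proof (cases "x = a")
  case True
  have "f x - L * (y - x) \<le> f y" if "y \<in> {a..b}" for y
    using lipschitz_onD[OF lip that x] that True by (auto simp: dist_real_def abs_le_iff)
  moreover have "0 \<le> L" using lip by (simp add: lipschitz_on_def)
  ultimately show ?thesis by (intro exI[of _ "-L"]) auto
next
  case False
  define A where "A = (\<lambda>y. (f x - f y) / (x - y)) ` {a..<x}"
  have A_ne: "A \<noteq> {}" using False x unfolding A_def by auto
  have A_abs: "\<bar>s\<bar> \<le> L" if s_A: "s \<in> A" for s
  proof -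
    obtain y where y: "y \<in> {a..<x}" and s: "s = (f x - f y) / (x - y)" using s_A unfolding A_def by blast
    have "y \<in> {a..b}" "x \<noteq> y" using x y by auto
    then show ?thesis unfolding s by (rule lipschitz_on_slope_abs_le[OF lip x])
  qed
  have bdd: "bdd_above A" using A_abs by (auto simp: bdd_above_def abs_le_iff)
  define d where "d = Sup A"
  have "d \<le> L" unfolding d_def using A_abs by (intro cSup_least[OF A_ne]) (auto simp: abs_le_iff)
  moreover have "- L \<le> d"
  proof -
    obtain s where "s \<in> A" using A_ne by blast
    then show ?thesis unfolding d_def using A_abs[of s] cSup_upper[OF _ bdd, of s] by linarith
  qed
  moreover have "f x + d * (y - x) \<le> f y" if y: "y \<in> {a..b}" for y
  proof (cases y x rule: linorder_cases)
    case less
    then have "(f x - f y) / (x - y) \<le> d" unfolding d_def using y by (intro cSup_upper[OF _ bdd]) (auto simp: A_def)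
    then have "f x - f y \<le> d * (x - y)" using less by (simp add: divide_le_eq)
    then show ?thesis by (simp add: right_diff_distrib)
  next
    case greater
    have "d \<le> (f y - f x) / (y - x)"
      unfolding d_def
    proof (rule cSup_least[OF A_ne])
      fix s assume "s \<in> A"
      then obtain w where "w \<in> {a..<x}" "s = (f x - f w) / (x - w)" unfolding A_def by blast
      then show "s \<le> (f y - f x) / (y - x)" using convex_on_chord_slopes_le[OF cv _ y _ greater, of w] x by auto
    qed
    then have "d * (y - x) \<le> f y - f x" using greater by (simp add: le_divide_eq)
    then show ?thesis by simp
  qed simp
  ultimately show ?thesis by (intro exI[of _ d]) auto
qed

lemma convex_lipschitz_le_mean:
  fixes f :: "real \<Rightarrow> real" and y :: "'a \<Rightarrow> real"
  assumes cv: "convex_on {a..b} f" and lip: "L-lipschitz_on {a..b} f"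
    and E: "finite E" "E \<noteq> {}" and y: "\<And>t. t \<in> E \<Longrightarrow> y t \<in> {a..b}" and x: "x \<in> {a..b}"
  shows "\<exists>d. \<bar>d\<bar> \<le> L \<and>
           f x \<le> (\<Sum>t\<in>E. f (y t)) / card E + d * (x - (\<Sum>t\<in>E. y t) / card E)"
proof -
  define mean where "mean = (\<Sum>t\<in>E. y t) / card E"
  have card_pos: "0 < real (card E)" using E by (simp add: card_gt_0_iff)
  have "real (card E) * a \<le> (\<Sum>t\<in>E. y t)" "(\<Sum>t\<in>E. y t) \<le> real (card E) * b"
    using sum_mono[of E "\<lambda>_. a" y] sum_mono[of E y "\<lambda>_. b"] y by auto
  then have mean_ab: "mean \<in> {a..b}"
    using card_pos by (simp add: mean_def divide_le_eq le_divide_eq mult.commute)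
  have "f mean = f (\<Sum>t\<in>E. (1 / card E) *\<^sub>R y t)"
    by (simp add: mean_def sum_divide_distrib)
  also have "\<dots> \<le> (\<Sum>t\<in>E. (1 / card E) * f (y t))"
    using card_pos y by (intro convex_on_sum[OF E cv]) auto
  also have "\<dots> = (\<Sum>t\<in>E. f (y t)) / card E"
    by (simp add: sum_divide_distrib)
  finally have jensen: "f mean \<le> (\<Sum>t\<in>E. f (y t)) / card E" .
  obtain d where "\<bar>d\<bar> \<le> L" and "f x + d * (mean - x) \<le> f mean"
    using convex_lipschitz_subgradient[OF cv lip x] mean_ab by blast
  then show ?thesis
    using jensen unfolding mean_def[symmetric] by (intro exI[of _ d]) (auto simp: algebra_simps)
qed

lemma gradient_step_regret:
  fixes mu a x :: "nat \<Rightarrow> real" and eta nu :: real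
  assumes eta: "0 < eta" and step: "\<And>t. t \<in> {s..<s+N} \<Longrightarrow> mu (Suc t) = mu t + eta * (a t - x t)"
  shows "(\<Sum>t\<in>{s..<s+N}. (mu t - nu) * (x t - a t))
           \<le> (mu s - nu)\<^sup>2 / (2 * eta) + eta / 2 * (\<Sum>t\<in>{s..<s+N}. (a t - x t)\<^sup>2)"
proof -
  have "(\<Sum>t\<in>{s..<s+N}. (mu t - nu) * (x t - a t))
         = (mu s - nu)\<^sup>2 / (2 * eta) - (mu (s+N) - nu)\<^sup>2 / (2 * eta)
           + eta / 2 * (\<Sum>t\<in>{s..<s+N}. (a t - x t)\<^sup>2)"
    using step
  proof (induction N)
    case (Suc N)
    have next_mu: "mu (Suc (s+N)) = mu (s+N) + eta * (a (s+N) - x (s+N))" using Suc.prems by simp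
    have "(mu (s+N) - nu) * (x (s+N) - a (s+N))
        = (mu (s+N) - nu)\<^sup>2 / (2 * eta) - (mu (Suc (s+N)) - nu)\<^sup>2 / (2 * eta)
          + eta / 2 * (a (s+N) - x (s+N))\<^sup>2"
      unfolding next_mu using eta by (simp add: field_simps power2_eq_square)
    moreover have "(\<Sum>t\<in>{s..<s+N}. (mu t - nu) * (x t - a t))
         = (mu s - nu)\<^sup>2 / (2 * eta) - (mu (s+N) - nu)\<^sup>2 / (2 * eta)
           + eta / 2 * (\<Sum>t\<in>{s..<s+N}. (a t - x t)\<^sup>2)"
      using Suc by simp
    ultimately show ?case by (simp add: algebra_simps)
  qed simp
  moreover have "0 \<le> (mu (s+N) - nu)\<^sup>2 / (2 * eta)" using eta by simp
  ultimately show ?thesis by linarith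
qed

lemma sum_times_partial_sums_swap:
  fixes f h :: "nat \<Rightarrow> 'a::comm_semiring_1"
  shows "(\<Sum>k'=k..K. f k' * (\<Sum>k''=k..k'. h k'')) = (\<Sum>k''=k..K. h k'' * (\<Sum>k'=k''..K. f k'))"
proof -
  have "(\<Sum>k'=k..K. f k' * (\<Sum>k''=k..k'. h k'')) = (\<Sum>k'\<in>{k..K}. \<Sum>k''\<in>{k''\<in>{k..K}. k'' \<le> k'}. f k' * h k'')"
    by (intro sum.cong) (auto simp: sum_distrib_left intro!: sum.cong)
  also have "\<dots> = (\<Sum>k''\<in>{k..K}. \<Sum>k'\<in>{k'\<in>{k..K}. k'' \<le> k'}. f k' * h k'')"
    by (rule sum.swap_restrict) auto
  also have "\<dots> = (\<Sum>k''=k..K. h k'' * (\<Sum>k'=k''..K. f k'))"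
    by (intro sum.cong) (auto simp: sum_distrib_left mult.commute intro!: sum.cong)
  finally show ?thesis .
qed

lemma abs_sum_atLeastAtMost_le:
  fixes d :: "nat \<Rightarrow> real"
  assumes d: "\<And>k. k \<in> {k0..K} \<Longrightarrow> \<bar>d k\<bar> \<le> L" and "1 \<le> k0" "k0 \<le> K"
  shows "\<bar>\<Sum>k=k0..K. d k\<bar> \<le> real K * L"
proof -
  have "\<bar>\<Sum>k=k0..K. d k\<bar> \<le> (\<Sum>k=k0..K. \<bar>d k\<bar>)" by (rule sum_abs)
  also have "\<dots> \<le> real (card {k0..K}) * L" using d by (intro sum_bounded_above) auto
  also have "\<dots> \<le> real K * L"
  proof (rule mult_right_mono)
    show "real (card {k0..K}) \<le> real K" using assms by simp
    show "0 \<le> L" using d[of k0] assms by force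
  qed
  finally show ?thesis .
qed

lemma square_sum_div_le:
  fixes u v B eta :: real
  assumes "0 < eta" "\<bar>v\<bar> \<le> B"
  shows "(u + v)\<^sup>2 / (2 * eta) \<le> (u\<^sup>2 + B\<^sup>2) / eta"
proof -
  have "(u + v)\<^sup>2 \<le> 2 * u\<^sup>2 + 2 * v\<^sup>2"
    using zero_le_power2[of "u - v"] by (simp add: power2_eq_square algebra_simps)
  moreover have "v\<^sup>2 \<le> B\<^sup>2" using assms(2) by (metis abs_le_square_iff abs_ge_self order.trans)
  ultimately show ?thesis using assms(1) by (simp add: field_simps)
qed

lemma step_size_tradeoff:
  fixes B D eta s c1 c2 :: real
  assumes "0 \<le> B" "0 \<le> D" "0 < c1" "0 < s" "c1 / s \<le> eta" "eta \<le> c2 / s"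
  shows "B / eta + D * (eta * s\<^sup>2 / 2) \<le> (B / c1 + D * c2 / 2) * s"
proof -
  have "0 < c1 / s" using assms by simp
  moreover have "0 < eta" using \<open>0 < c1 / s\<close> assms(5) by linarith
  ultimately have "B / eta \<le> B / (c1 / s)" using assms by (intro divide_left_mono) auto
  also have "\<dots> = B / c1 * s" by simp
  finally have B_part: "B / eta \<le> B / c1 * s" .
  have "eta * s\<^sup>2 \<le> c2 / s * s\<^sup>2" using assms by (intro mult_right_mono) auto
  also have "\<dots> = c2 * s" using assms by (simp add: power2_eq_square)
  finally have "D * (eta * s\<^sup>2 / 2) \<le> D * (c2 * s / 2)" using assms by (intro mult_left_mono) auto
  with B_part show ?thesis by (simp add: distrib_right)
qed

lemma finite_set_Pi_pmf:
  assumes "finite A" "finite (set_pmf P)"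
  shows "finite (set_pmf (Pi_pmf A d (\<lambda>_. P)))"
  by (rule finite_subset[OF set_Pi_pmf_subset'[OF assms(1)]]) (use assms in auto)

lemma expectation_pair_pmf_iterated:
  fixes h :: "'a \<times> 'b \<Rightarrow> real"
  assumes fA: "finite (set_pmf A)" and fB: "finite (set_pmf B)"
  shows "measure_pmf.expectation (pair_pmf A B) h
       = measure_pmf.expectation B (\<lambda>b. measure_pmf.expectation A (\<lambda>a. h (a, b)))"
proof -
  have inner: "measure_pmf.expectation A (\<lambda>a. h (a, b)) = (\<Sum>a\<in>set_pmf A. h (a, b) * pmf A a)" for b
    by (rule integral_measure_pmf_real) (use fA in auto)
  have "measure_pmf.expectation (pair_pmf A B) h = (\<Sum>p\<in>set_pmf A \<times> set_pmf B. h p * pmf (pair_pmf A B) p)"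
    by (rule integral_measure_pmf_real) (use fA fB in auto)
  also have "\<dots> = (\<Sum>b\<in>set_pmf B. (\<Sum>a\<in>set_pmf A. h (a, b) * pmf A a) * pmf B b)"
    by (subst sum.cartesian_product', subst sum.swap) (simp add: pmf_pair sum_distrib_right mult.assoc)
  also have "\<dots> = measure_pmf.expectation B (\<lambda>b. measure_pmf.expectation A (\<lambda>a. h (a, b)))"
    unfolding inner by (rule integral_measure_pmf_real[symmetric]) (use fB in auto)
  finally show ?thesis .
qed

lemma expectation_Pi_pmf_coordinate:
  fixes F :: "('a \<Rightarrow> 'b) \<Rightarrow> 'c" and G :: "'b \<Rightarrow> 'c \<Rightarrow> real"
  assumes A: "finite A" "t \<in> A" and fP: "finite (set_pmf P)"
    and F: "\<And>J y. F (J(t := y)) = F J"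
  shows "measure_pmf.expectation (Pi_pmf A d (\<lambda>_. P)) (\<lambda>J. G (J t) (F J))
       = measure_pmf.expectation (Pi_pmf A d (\<lambda>_. P)) (\<lambda>J. measure_pmf.expectation P (\<lambda>y. G y (F J)))"
proof -
  define Q where "Q = Pi_pmf (A - {t}) d (\<lambda>_. P)"
  have fQ: "finite (set_pmf Q)" unfolding Q_def using A fP by (intro finite_set_Pi_pmf) auto
  have split: "Pi_pmf A d (\<lambda>_. P) = map_pmf (\<lambda>(y, J). J(t := y)) (pair_pmf P Q)"
    using Pi_pmf_insert[of "A - {t}" t d "\<lambda>_. P"] A unfolding Q_def by (simp add: insert_absorb)
  have "measure_pmf.expectation (Pi_pmf A d (\<lambda>_. P)) (\<lambda>J. G (J t) (F J))
      = measure_pmf.expectation Q (\<lambda>J. measure_pmf.expectation P (\<lambda>y. G y (F J)))"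
    unfolding split by (simp add: case_prod_unfold F expectation_pair_pmf_iterated[OF fP fQ])
  also have "\<dots> = measure_pmf.expectation (Pi_pmf A d (\<lambda>_. P)) (\<lambda>J. measure_pmf.expectation P (\<lambda>y. G y (F J)))"
    unfolding split by (simp add: case_prod_unfold F expectation_pair_pmf_iterated[OF fP fQ])
  finally show ?thesis .
qed

lemma sum_swap3: "(\<Sum>x\<in>A. \<Sum>y\<in>B. \<Sum>z\<in>C. f x y z) = (\<Sum>z\<in>C. \<Sum>x\<in>A. \<Sum>y\<in>B. f x y z)"
proof -
  have "(\<Sum>x\<in>A. \<Sum>y\<in>B. \<Sum>z\<in>C. f x y z) = (\<Sum>x\<in>A. \<Sum>z\<in>C. \<Sum>y\<in>B. f x y z)"
    by (rule sum.cong[OF refl], rule sum.swap)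
  then show ?thesis by (simp only: sum.swap[of _ A C])
qed

lemma unit_box_partial_sum_bounds:
  assumes "a \<in> unit_box" "k \<le> k'"
  shows "0 \<le> (\<Sum>k''=k..k'. a k'' i) \<and> (\<Sum>k''=k..k'. a k'' i) \<le> real k' - real k + 1"
proof -
  have "(\<Sum>k''=k..k'. a k'' i) \<le> (\<Sum>k''=k..k'. 1)"
    using assms by (intro sum_mono) (auto simp: unit_box_def)
  then show ?thesis using assms by (auto intro: sum_nonneg simp: unit_box_def of_nat_diff)
qed

locale dgd_run =
  fixes m n K T :: nat and c :: "nat \<Rightarrow> nat \<Rightarrow> real" and S :: "nat \<Rightarrow> nat set"
    and g :: "nat \<Rightarrow> nat \<Rightarrow> real \<Rightarrow> real" and L :: real and mu1 :: "nat \<Rightarrow> nat \<Rightarrow> real"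
    and eta :: real
    and selX :: "nat \<Rightarrow> nat list \<Rightarrow> nat \<Rightarrow> nat \<Rightarrow> (nat \<Rightarrow> real) \<Rightarrow> (nat \<Rightarrow> real)"
    and selA :: "nat \<Rightarrow> nat list \<Rightarrow> ((nat \<Rightarrow> nat \<Rightarrow> real) \<Rightarrow> real) \<Rightarrow> (nat \<Rightarrow> nat \<Rightarrow> real)"
  assumes K_pos: "1 \<le> K" and K_dvd: "K dvd T" and T_pos: "0 < T"
    and S_sub: "\<And>j. j < n \<Longrightarrow> S j \<subseteq> {..<m}"
    and g_convex: "\<And>k i. k \<in> {1..K} \<Longrightarrow> i < m \<Longrightarrow> convex_on {0..1} (g k i)"
    and g_lipschitz: "\<And>k i. k \<in> {1..K} \<Longrightarrow> i < m \<Longrightarrow> L-lipschitz_on {0..1} (g k i)"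
    and valid: "valid_selectors m n S selX selA"
    and eta_pos: "0 < eta"
begin

abbreviation N where "N \<equiv> T div K"

abbreviation epoch where "epoch k \<equiv> epoch_periods K T k"

text \<open>\<open>mu_at J t\<close>, \<open>x_at J t k'\<close> and \<open>a_at J t\<close> are \<open>\<mu>\<^sup>t\<close> (after the reset at an epoch start),
  the proxy decisions \<open>x\<^sup>t\<^sub>k\<^sub>'\<close> and \<open>a\<^sup>t\<close> of the paper; \<open>z_start J k\<close> is the usage \<open>Z\<^sup>\<pi>((k-1)T/K)\<close>.\<close>

definition "state_at J t = dgd_state m K T c g mu1 eta selX selA J t"

definition "step_at J t = step_data m K T c g mu1 selX selA J t (state_at J (t - 1))"

definition "mu_at J t = fst (step_at J t)"
definition "U0_at J t = fst (snd (step_at J t))"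
definition "x_at J t = fst (snd (snd (step_at J t)))"
definition "a_at J t = snd (snd (snd (step_at J t)))"

definition "z_start J k = usage m K T c g mu1 eta selX selA J ((k - 1) * N)"

definition "valid_arrivals J \<longleftrightarrow> (\<forall>t\<in>{1..T}. J t < n)"

definition "admissible_start k z \<longleftrightarrow> (\<forall>i<m. 0 \<le> z i \<and> z i \<le> (real k - 1) * real N)"

lemma N_pos: "0 < N"
  using K_pos K_dvd T_pos by (auto elim!: dvdE)

lemma T_div_K: "real T / real K = real N"
  using K_pos K_dvd by (auto elim!: dvdE)

lemma scaled_T_div_K: "real k' * real T / real K = real k' * real N"
  using T_div_K by (simp add: times_divide_eq_right[symmetric])

lemma epoch_eq: "k \<in> {1..K} \<Longrightarrow> epoch k = {(k - 1) * N + 1 ..< (k - 1) * N + 1 + N}"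
  by (cases k) (auto simp: epoch_periods_def)

lemma finite_epoch: "finite (epoch k)"
  by (simp add: epoch_periods_def)

lemma card_epoch: "k \<in> {1..K} \<Longrightarrow> card (epoch k) = N"
  by (simp add: epoch_eq)

lemma epoch_start_mem: "k \<in> {1..K} \<Longrightarrow> (k - 1) * N + 1 \<in> epoch k"
  using N_pos by (simp add: epoch_eq)

lemma epoch_subset: "k \<in> {1..K} \<Longrightarrow> epoch k \<subseteq> {1..T}"
proof -
  assume k: "k \<in> {1..K}"
  have "k * N \<le> K * N" using k by auto
  then show ?thesis using K_dvd by (auto simp: epoch_periods_def)
qed

lemma epoch_of_epoch:
  assumes "k \<in> {1..K}" "t \<in> epoch k"
  shows "epoch_of K T t = k"
proof -
  have "(t - 1) div N = k - 1"
    using assms by (intro div_nat_eqI) (auto simp: epoch_eq algebra_simps)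
  then show ?thesis using assms by (simp add: epoch_of_def)
qed

lemma state_at_0: "state_at J 0 = (mu1, (\<lambda>i. 0), (\<lambda>i. 0))"
  by (simp add: state_at_def)

lemma state_at_Suc: "state_at J (Suc t) =
   ((\<lambda>k' i. if epoch_of K T (Suc t) \<le> k'
             then mu_at J (Suc t) k' i + eta * (a_at J (Suc t) k' i - x_at J (Suc t) k' i)
             else mu_at J (Suc t) k' i),
    (\<lambda>i. fst (snd (state_at J t)) i + x_at J (Suc t) (epoch_of K T (Suc t)) i),
    U0_at J (Suc t))"
proof -
  have "state_at J (Suc t) = (let (mu', U0', xt, a) = step_at J (Suc t);
          k = epoch_of K T (Suc t);
          mu'' = (\<lambda>k' i. if k \<le> k' then mu' k' i + eta * (a k' i - xt k' i) else mu' k' i)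
      in (mu'', (\<lambda>i. fst (snd (state_at J t)) i + xt k i), U0'))"
    unfolding step_at_def state_at_def by simp
  then show ?thesis unfolding mu_at_def a_at_def x_at_def U0_at_def by (simp add: Let_def case_prod_unfold)
qed

lemma mu_at_Suc: "mu_at J (Suc t) = (if Suc t = (epoch_of K T (Suc t) - 1) * N + 1
    then (\<lambda>k' i. if epoch_of K T (Suc t) \<le> k' then mu1 k' i else fst (state_at J t) k' i)
    else fst (state_at J t))"
  by (simp add: mu_at_def step_at_def step_data_def Let_def case_prod_unfold)

lemma U0_at_Suc: "U0_at J (Suc t) = (if Suc t = (epoch_of K T (Suc t) - 1) * N + 1
    then fst (snd (state_at J t)) else snd (snd (state_at J t)))"
  by (simp add: U0_at_def step_at_def step_data_def Let_def case_prod_unfold)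

lemma x_at_eq: "x_at J t k' = selX t (map J [1..<t + 1]) k' (J t) (\<lambda>i. c (J t) i - mu_at J t k' i)"
  by (simp add: x_at_def mu_at_def step_at_def step_data_def Let_def case_prod_unfold)

lemma a_at_eq:
  "a_at J t = selA t (map J [1..<t + 1]) (a_objective m K T g (epoch_of K T t) (U0_at J t) (mu_at J t))"
  by (simp add: a_at_def mu_at_def U0_at_def step_at_def step_data_def Let_def case_prod_unfold)

lemma proxy_x_eq: "proxy_x m K T c g mu1 eta selX selA J t k' = x_at J t k'"
  by (simp add: proxy_x_def x_at_def step_at_def state_at_def)

lemma usage_eq_state: "usage m K T c g mu1 eta selX selA J t i = fst (snd (state_at J t)) i"
  by (induction t) (simp_all add: state_at_0 state_at_Suc usage_def impl_x_def proxy_x_eq)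

lemma state_at_cong: "(\<And>\<tau>. \<tau> \<in> {1..t} \<Longrightarrow> J \<tau> = J' \<tau>) \<Longrightarrow> state_at J t = state_at J' t"
proof (induction t)
  case (Suc t)
  have IH: "state_at J t = state_at J' t" using Suc by auto
  have map_eq: "map J [1..<Suc t + 1] = map J' [1..<Suc t + 1]" and J_eq: "J (Suc t) = J' (Suc t)"
    using Suc.prems by auto
  have "step_at J (Suc t) = step_at J' (Suc t)"
    unfolding step_at_def diff_Suc_1 step_data_def Let_def IH map_eq J_eq ..
  then show ?case by (simp only: state_at_Suc mu_at_def a_at_def x_at_def U0_at_def IH)
qed (simp add: state_at_0)

lemma mu_at_epoch_start:
  assumes "k \<in> {1..K}" "k \<le> k'"
  shows "mu_at J ((k - 1) * N + 1) k' i = mu1 k' i"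
  using assms epoch_of_epoch[OF assms(1) epoch_start_mem[OF assms(1)]] by (simp add: mu_at_Suc)

lemma mu_at_step:
  assumes k: "k \<in> {1..K}" and t: "t \<in> epoch k" "Suc t \<in> epoch k" and "k \<le> k'"
  shows "mu_at J (Suc t) k' i = mu_at J t k' i + eta * (a_at J t k' i - x_at J t k' i)"
proof -
  obtain t' where t': "t = Suc t'" using t(1) by (cases t) (auto simp: epoch_periods_def)
  have "Suc t \<noteq> (k - 1) * N + 1" using t(1) by (auto simp: epoch_periods_def)
  then show ?thesis
    using epoch_of_epoch[OF k t(1)] epoch_of_epoch[OF k t(2)] \<open>k \<le> k'\<close> by (simp add: mu_at_Suc t' state_at_Suc)
qed

lemma U0_at_epoch:
  assumes k: "k \<in> {1..K}" and t: "t \<in> epoch k"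
  shows "U0_at J t = z_start J k"
proof -
  have "U0_at J ((k - 1) * N + 1 + r) = z_start J k" if "r < N" for r
    using that
  proof (induction r)
    case 0
    then show ?case using epoch_of_epoch[OF k epoch_start_mem[OF k]]
      by (simp add: U0_at_Suc z_start_def usage_eq_state[abs_def])
  next
    case (Suc r)
    then have "Suc ((k - 1) * N + 1 + r) \<in> epoch k" using k by (simp add: epoch_eq)
    then show ?case using Suc epoch_of_epoch[OF k] by (simp add: U0_at_Suc state_at_Suc)
  qed
  moreover have "t = (k - 1) * N + 1 + (t - ((k - 1) * N + 1))" "t - ((k - 1) * N + 1) < N"
    using t k by (auto simp: epoch_eq)
  ultimately show ?thesis by metis
qed

definition "lin_min j r = (INF x\<in>feasX m S j. \<Sum>i<m. x i * r i)"

definition "box_min k z mu = (INF b\<in>unit_box. a_objective m K T g k z mu b)"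

text \<open>The Lagrangian dual function of the proxy problem of epoch \<open>k\<close> restricted to a single
  arrival of type \<open>j\<close>.\<close>

definition "dual_value k z mu j = (\<Sum>k''=k..K. lin_min j (\<lambda>i. c j i - mu k'' i)) + box_min k z mu"

lemma selX_minimizes:
  assumes "j < n"
  shows "selX t h k' j r \<in> feasX m S j"
    and "\<And>x. x \<in> feasX m S j \<Longrightarrow> (\<Sum>i<m. selX t h k' j r i * r i) \<le> (\<Sum>i<m. x i * r i)"
  using valid assms unfolding valid_selectors_def by blast+

lemma selX_value: "j < n \<Longrightarrow> (\<Sum>i<m. selX t h k' j r i * r i) = lin_min j r"
  unfolding lin_min_def by (rule cInf_eq_minimum[symmetric]) (auto intro: selX_minimizes)

lemma lin_min_le: "j < n \<Longrightarrow> x \<in> feasX m S j \<Longrightarrow> lin_min j r \<le> (\<Sum>i<m. x i * r i)"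
  using selX_minimizes(2) selX_value by metis

lemma lin_min_nonpos: "j < n \<Longrightarrow> lin_min j r \<le> 0"
  using lin_min_le[of j "\<lambda>_. 0"] by (simp add: feasX_def)

lemma lin_min_le_entry:
  assumes "j < n" "i \<in> S j"
  shows "lin_min j r \<le> r i"
proof -
  have "i < m" using S_sub assms by auto
  then have "(\<lambda>i'. if i' = i then 1 else 0) \<in> feasX m S j"
    using assms by (auto simp: feasX_def)
  from lin_min_le[OF assms(1) this, of r] show ?thesis
    using \<open>i < m\<close> by (simp add: if_distrib[where f="\<lambda>x. x * _"] cong: if_cong)
qed

lemma feasX_bounds: "x \<in> feasX m S j \<Longrightarrow> 0 \<le> x i \<and> x i \<le> 1"
  unfolding feasX_def by (cases "x i = 0") auto

lemma x_at_feasX: "valid_arrivals J \<Longrightarrow> t \<in> {1..T} \<Longrightarrow> x_at J t k' \<in> feasX m S (J t)"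
  using selX_minimizes(1) by (simp add: x_at_eq valid_arrivals_def)

lemma x_at_value:
  "valid_arrivals J \<Longrightarrow> t \<in> {1..T} \<Longrightarrow>
     (\<Sum>i<m. x_at J t k' i * (c (J t) i - mu_at J t k' i)) = lin_min (J t) (\<lambda>i. c (J t) i - mu_at J t k' i)"
  using selX_value by (simp add: x_at_eq valid_arrivals_def)

lemma z_start_admissible:
  assumes J: "valid_arrivals J" and k: "k \<in> {1..K}"
  shows "admissible_start k (z_start J k)"
proof -
  have "(k - 1) * N \<le> K * N" using k by (intro mult_le_mono1) auto
  then have T: "(k - 1) * N \<le> T" using K_dvd by simp
  have x01: "0 \<le> impl_x m K T c g mu1 eta selX selA J t i \<and> impl_x m K T c g mu1 eta selX selA J t i \<le> 1"
    if "t \<in> {1..(k - 1) * N}" for t i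
    using feasX_bounds[OF x_at_feasX[OF J]] that T by (simp add: impl_x_def proxy_x_eq)
  have "usage m K T c g mu1 eta selX selA J ((k - 1) * N) i \<le> (\<Sum>t=1..(k - 1) * N. 1)" for i
    unfolding usage_def using x01 by (intro sum_mono) auto
  then show ?thesis using x01 k
    by (auto simp: admissible_start_def z_start_def usage_def of_nat_diff intro: sum_nonneg)
qed

lemma g_argument_mem:
  assumes "admissible_start k z" "k \<in> {1..K}" "k \<le> k'" "i < m" "0 \<le> s" "s \<le> real k' - real k + 1"
  shows "z i / (real k' * real N) + s / real k' \<in> {0..1}"
proof -
  have k'_pos: "0 < real k'" and "0 < real N" using assms N_pos by auto
  have "z i / (real k' * real N) \<le> (real k - 1) / real k'"
    using assms k'_pos \<open>0 < real N\<close> by (simp add: admissible_start_def field_simps)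
  moreover have "s / real k' \<le> (real k' - real k + 1) / real k'"
    using assms k'_pos by (simp add: divide_right_mono)
  moreover have "(real k - 1) / real k' + (real k' - real k + 1) / real k' = 1"
    using k'_pos by (simp add: field_simps)
  ultimately show ?thesis using assms k'_pos \<open>0 < real N\<close> by (auto simp: admissible_start_def)
qed

lemma a_objective_attains_min:
  assumes z: "admissible_start k z" and k: "k \<in> {1..K}"
  shows "\<exists>a\<in>unit_box. \<forall>b\<in>unit_box. a_objective m K T g k z mu a \<le> a_objective m K T g k z mu b"
proof -
  have "continuous_on unit_box
          (\<lambda>a. g k' i (z i / (real k' * real T / real K) + (\<Sum>k''=k..k'. a k'' i) / real k'))"
    if "k' \<in> {k..K}" "i < m" for k' i
  proof (rule continuous_on_compose2[of "{0..1}" "g k' i"])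
    show "continuous_on {0..1} (g k' i)"
      by (rule lipschitz_on_continuous_on[OF g_lipschitz]) (use that k in auto)
    show "continuous_on unit_box (\<lambda>a. z i / (real k' * real T / real K) + (\<Sum>k''=k..k'. a k'' i) / real k')"
      by (intro continuous_intros continuous_on_entry) (use that k in auto)
    show "(\<lambda>a. z i / (real k' * real T / real K) + (\<Sum>k''=k..k'. a k'' i) / real k') ` unit_box \<subseteq> {0..1}"
      using g_argument_mem[OF z k] unit_box_partial_sum_bounds that by (auto simp: scaled_T_div_K)
  qed
  then have "continuous_on unit_box (a_objective m K T g k z mu)"
    unfolding a_objective_def by (intro continuous_intros continuous_on_entry) auto
  moreover have "unit_box \<noteq> {}" by (auto simp: unit_box_def intro!: exI[of _ "\<lambda>_ _. 0"])
  ultimately show ?thesis using continuous_attains_inf[OF compact_unit_box] by blast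
qed

lemma selA_minimizes:
  assumes "admissible_start k z" "k \<in> {1..K}"
  shows "selA t h (a_objective m K T g k z mu) \<in> unit_box"
    and "a_objective m K T g k z mu (selA t h (a_objective m K T g k z mu)) = box_min k z mu"
proof -
  have "selA t h (a_objective m K T g k z mu) \<in> unit_box \<and>
    (\<forall>b\<in>unit_box. a_objective m K T g k z mu (selA t h (a_objective m K T g k z mu)) \<le> a_objective m K T g k z mu b)"
    using valid a_objective_attains_min[OF assms, of mu] unfolding valid_selectors_def by blast
  then show "selA t h (a_objective m K T g k z mu) \<in> unit_box"
    and "a_objective m K T g k z mu (selA t h (a_objective m K T g k z mu)) = box_min k z mu"
    unfolding box_min_def by (auto intro!: cInf_eq_minimum[symmetric])
qed

lemma box_min_le:
  assumes "admissible_start k z" "k \<in> {1..K}" "b \<in> unit_box"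
  shows "box_min k z mu \<le> a_objective m K T g k z mu b"
proof -
  obtain a where "\<forall>b\<in>unit_box. a_objective m K T g k z mu a \<le> a_objective m K T g k z mu b"
    using a_objective_attains_min[OF assms(1,2)] by blast
  then have "bdd_below (a_objective m K T g k z mu ` unit_box)" by (auto simp: bdd_below_def)
  then show ?thesis unfolding box_min_def by (rule cINF_lower[OF _ assms(3)])
qed

lemma a_at_minimizes:
  assumes J: "valid_arrivals J" and k: "k \<in> {1..K}" and t: "t \<in> epoch k"
  shows "a_at J t \<in> unit_box"
    and "a_objective m K T g k (z_start J k) (mu_at J t) (a_at J t) = box_min k (z_start J k) (mu_at J t)"
  using selA_minimizes[OF z_start_admissible[OF J k] k]
  by (simp_all add: a_at_eq epoch_of_epoch[OF k t] U0_at_epoch[OF k t])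

section \<open>Upper bound on the proxy cost\<close>

lemma arrival_type_lt: "valid_arrivals J \<Longrightarrow> k \<in> {1..K} \<Longrightarrow> t \<in> epoch k \<Longrightarrow> J t < n"
  using epoch_subset by (auto simp: valid_arrivals_def)

lemma x_at_bounds: "valid_arrivals J \<Longrightarrow> k \<in> {1..K} \<Longrightarrow> t \<in> epoch k \<Longrightarrow> 0 \<le> x_at J t k' i \<and> x_at J t k' i \<le> 1"
  using feasX_bounds[OF x_at_feasX] epoch_subset by blast

lemma epoch_sum_bounds:
  fixes u :: "nat \<Rightarrow> nat \<Rightarrow> real"
  assumes k: "k \<in> {1..K}" "k \<le> k'" and u: "\<And>t k''. t \<in> epoch k \<Longrightarrow> 0 \<le> u t k'' \<and> u t k'' \<le> 1"
  shows "0 \<le> (\<Sum>t\<in>epoch k. \<Sum>k''=k..k'. u t k'') / real N"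
    and "(\<Sum>t\<in>epoch k. \<Sum>k''=k..k'. u t k'') / real N \<le> real k' - real k + 1"
proof -
  have "(\<Sum>t\<in>epoch k. \<Sum>k''=k..k'. u t k'') \<le> (\<Sum>t\<in>epoch k. \<Sum>k''=k..k'. 1)"
    using u by (intro sum_mono) auto
  also have "\<dots> = real N * (real k' - real k + 1)" using k by (simp add: card_epoch of_nat_diff)
  finally show "(\<Sum>t\<in>epoch k. \<Sum>k''=k..k'. u t k'') / real N \<le> real k' - real k + 1"
    using N_pos by (simp add: divide_le_eq mult.commute)
  show "0 \<le> (\<Sum>t\<in>epoch k. \<Sum>k''=k..k'. u t k'') / real N"
    by (intro divide_nonneg_nonneg sum_nonneg) (use u in auto)
qed

text \<open>Jensen's inequality over the periods of the epoch moves \<open>g\<close> from the realised proxy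
  usage to the box decisions \<open>a\<^sup>t\<close>, at the price of a subgradient term.\<close>

lemma g_cost_jensen_bound:
  assumes J: "valid_arrivals J" and k: "k \<in> {1..K}" and k': "k' \<in> {k..K}" and i: "i < m"
  defines "z \<equiv> z_start J k i"
    and "X \<equiv> \<Sum>t\<in>epoch k. \<Sum>k''=k..k'. x_at J t k'' i"
    and "A \<equiv> \<Sum>t\<in>epoch k. \<Sum>k''=k..k'. a_at J t k'' i"
  shows "\<exists>d. \<bar>d\<bar> \<le> L \<and>
    real N * (real k' * g k' i ((z + X) / (real k' * real N)))
    \<le> (\<Sum>t\<in>epoch k. real k' * g k' i (z / (real k' * real N) + (\<Sum>k''=k..k'. a_at J t k'' i) / real k'))
       + d * (X - A)"
proof -
  define y where "y t = z / (real k' * real N) + (\<Sum>k''=k..k'. a_at J t k'' i) / real k'" for t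
  have z: "admissible_start k (z_start J k)" and kk': "k \<le> k'" "k' \<in> {1..K}"
    using z_start_admissible[OF J k] k k' by auto
  have Nk': "0 < real N" "0 < real k'" using N_pos kk' by auto
  have x_eq: "(z + X) / (real k' * real N) = z / (real k' * real N) + (X / real N) / real k'"
    by (simp add: add_divide_distrib)
  have "0 \<le> X / real N" "X / real N \<le> real k' - real k + 1"
    unfolding X_def using epoch_sum_bounds[OF k kk'(1)] x_at_bounds[OF J k] by auto
  then have "z / (real k' * real N) + (X / real N) / real k' \<in> {0..1}"
    unfolding z_def by (rule g_argument_mem[OF z k kk'(1) i])
  then have "(z + X) / (real k' * real N) \<in> {0..1}" by (simp only: x_eq)
  moreover have "y t \<in> {0..1}" if "t \<in> epoch k" for t
    unfolding y_def z_def using g_argument_mem[OF z k kk'(1) i]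
      unit_box_partial_sum_bounds[OF a_at_minimizes(1)[OF J k that] kk'(1)] by simp
  moreover have "epoch k \<noteq> {}" using epoch_start_mem[OF k] by auto
  ultimately obtain d where d: "\<bar>d\<bar> \<le> L"
    and le: "g k' i ((z + X) / (real k' * real N)) \<le> (\<Sum>t\<in>epoch k. g k' i (y t)) / real N
              + d * ((z + X) / (real k' * real N) - (\<Sum>t\<in>epoch k. y t) / real N)"
    using convex_lipschitz_le_mean[OF g_convex[OF kk'(2) i] g_lipschitz[OF kk'(2) i] finite_epoch]
    by (metis card_epoch[OF k])
  have "(\<Sum>t\<in>epoch k. y t) / real N = (z + A) / (real k' * real N)"
    using Nk' by (simp add: y_def A_def sum.distrib card_epoch[OF k] sum_divide_distrib[symmetric]
        sum_distrib_left[symmetric] field_simps)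
  then have "(z + X) / (real k' * real N) - (\<Sum>t\<in>epoch k. y t) / real N = (X - A) / (real k' * real N)"
    by (simp add: diff_divide_distrib[symmetric])
  then have "real N * real k' * g k' i ((z + X) / (real k' * real N))
      \<le> real N * real k' * ((\<Sum>t\<in>epoch k. g k' i (y t)) / real N + d * ((X - A) / (real k' * real N)))"
    using le Nk' by (intro mult_left_mono) auto
  also have "\<dots> = real k' * (\<Sum>t\<in>epoch k. g k' i (y t)) + d * (X - A)"
    using Nk' by (simp add: field_simps)
  finally show ?thesis using d by (intro exI[of _ d]) (simp add: y_def sum_distrib_left mult.assoc)
qed

lemma proxy_Z_eq: "proxy_Z m K T c g mu1 eta selX selA J k k1 k2 j i =
   (\<Sum>t\<in>epoch k. \<Sum>k''=k1..k2. (if J t = j then x_at J t k'' i else 0))"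
  by (simp add: proxy_Z_def proxy_x_eq cong: if_cong)

lemma sum_types_proxy_Z:
  assumes "valid_arrivals J" "k \<in> {1..K}"
  shows "(\<Sum>j<n. proxy_Z m K T c g mu1 eta selX selA J k k1 k2 j i) = (\<Sum>t\<in>epoch k. \<Sum>k''=k1..k2. x_at J t k'' i)"
proof -
  have "(\<Sum>j<n. proxy_Z m K T c g mu1 eta selX selA J k k1 k2 j i)
      = (\<Sum>t\<in>epoch k. \<Sum>k''=k1..k2. \<Sum>j<n. (if J t = j then x_at J t k'' i else 0))"
    unfolding proxy_Z_eq by (subst sum.swap, rule sum.cong[OF refl], rule sum.swap)
  then show ?thesis using arrival_type_lt[OF assms] by simp
qed

lemma cost_proxy_Z:
  assumes "valid_arrivals J" "k \<in> {1..K}"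
  shows "(\<Sum>j<n. \<Sum>i<m. c j i * proxy_Z m K T c g mu1 eta selX selA J k k K j i)
       = (\<Sum>t\<in>epoch k. \<Sum>k''=k..K. \<Sum>i<m. c (J t) i * x_at J t k'' i)"
proof -
  have "(\<Sum>j<n. \<Sum>i<m. c j i * proxy_Z m K T c g mu1 eta selX selA J k k K j i)
      = (\<Sum>i<m. \<Sum>t\<in>epoch k. \<Sum>k''=k..K. \<Sum>j<n. (if J t = j then c j i * x_at J t k'' i else 0))"
    unfolding proxy_Z_eq
    by (subst sum.swap) (simp add: sum_distrib_left if_distrib[where f="\<lambda>x. _ * x"] sum.swap[of _ "{..<n}"]
        cong: if_cong)
  also have "\<dots> = (\<Sum>t\<in>epoch k. \<Sum>k''=k..K. \<Sum>i<m. c (J t) i * x_at J t k'' i)"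
    using arrival_type_lt[OF assms] by (simp add: sum.swap[of _ "{..<m}"])
  finally show ?thesis .
qed

lemma proxy_V_eq:
  assumes "valid_arrivals J" "k \<in> {1..K}"
  shows "proxy_V m n K T c g mu1 eta selX selA J k z
     = (\<Sum>t\<in>epoch k. \<Sum>k''=k..K. \<Sum>i<m. c (J t) i * x_at J t k'' i)
       + (\<Sum>k'=k..K. \<Sum>i<m. real N * (real k' *
            g k' i ((z i + (\<Sum>t\<in>epoch k. \<Sum>k''=k..k'. x_at J t k'' i)) / (real k' * real N))))"
  unfolding proxy_V_def cost_proxy_Z[OF assms] sum_types_proxy_Z[OF assms] scaled_T_div_K T_div_K
  by (simp add: sum_distrib_left)

lemma linear_cost_eq_lin_min:
  assumes "valid_arrivals J" "k \<in> {1..K}" "t \<in> epoch k"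
  shows "(\<Sum>i<m. c (J t) i * x_at J t k'' i) =
         lin_min (J t) (\<lambda>i. c (J t) i - mu_at J t k'' i) + (\<Sum>i<m. mu_at J t k'' i * x_at J t k'' i)"
proof -
  have "(\<Sum>i<m. c (J t) i * x_at J t k'' i)
      = (\<Sum>i<m. x_at J t k'' i * (c (J t) i - mu_at J t k'' i)) + (\<Sum>i<m. mu_at J t k'' i * x_at J t k'' i)"
    by (simp add: sum.distrib[symmetric] algebra_simps)
  then show ?thesis using x_at_value[OF assms(1)] epoch_subset[OF assms(2)] assms(3) by auto
qed

lemma g_cost_at_a_at_eq:
  assumes "valid_arrivals J" "k \<in> {1..K}" "t \<in> epoch k"
  shows "(\<Sum>k'=k..K. \<Sum>i<m. real k' * g k' i (z_start J k i / (real k' * real N) + (\<Sum>k''=k..k'. a_at J t k'' i) / real k'))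
      = box_min k (z_start J k) (mu_at J t) - (\<Sum>k''=k..K. \<Sum>i<m. mu_at J t k'' i * a_at J t k'' i)"
  using a_at_minimizes(2)[OF assms] unfolding a_objective_def scaled_T_div_K
  by (simp add: sum_distrib_left)

text \<open>Summing the subgradient terms of \<open>g_cost_jensen_bound\<close> over \<open>k'\<close> by parts turns them into
  fixed multipliers \<open>lam k'' i\<close>, the tail sums of the subgradients.\<close>

lemma proxy_g_cost_le:
  assumes J: "valid_arrivals J" and k: "k \<in> {1..K}"
  obtains lam where "\<And>k'' i. k'' \<in> {k..K} \<Longrightarrow> i < m \<Longrightarrow> \<bar>lam k'' i\<bar> \<le> real K * L"
    and "(\<Sum>k'=k..K. \<Sum>i<m. real N * (real k' *
            g k' i ((z_start J k i + (\<Sum>t\<in>epoch k. \<Sum>k''=k..k'. x_at J t k'' i)) / (real k' * real N))))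
      \<le> (\<Sum>t\<in>epoch k. box_min k (z_start J k) (mu_at J t) - (\<Sum>k''=k..K. \<Sum>i<m. mu_at J t k'' i * a_at J t k'' i))
        + (\<Sum>k''=k..K. \<Sum>i<m. \<Sum>t\<in>epoch k. lam k'' i * (x_at J t k'' i - a_at J t k'' i))"
proof -
  define G where "G k'' i = (\<Sum>t\<in>epoch k. x_at J t k'' i - a_at J t k'' i)" for k'' i
  define lhs where "lhs k' i = real N * (real k' *
    g k' i ((z_start J k i + (\<Sum>t\<in>epoch k. \<Sum>k''=k..k'. x_at J t k'' i)) / (real k' * real N)))" for k' i
  define rhs where "rhs k' i = (\<Sum>t\<in>epoch k. real k' *
    g k' i (z_start J k i / (real k' * real N) + (\<Sum>k''=k..k'. a_at J t k'' i) / real k'))" for k' i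
  have "(\<Sum>t\<in>epoch k. \<Sum>k''=k..k'. x_at J t k'' i) - (\<Sum>t\<in>epoch k. \<Sum>k''=k..k'. a_at J t k'' i)
      = (\<Sum>k''=k..k'. G k'' i)" for k' i
    unfolding G_def sum_subtractf[symmetric] by (subst sum.swap) simp
  then have "\<forall>k' i. \<exists>d. k' \<in> {k..K} \<longrightarrow> i < m \<longrightarrow>
      \<bar>d\<bar> \<le> L \<and> lhs k' i \<le> rhs k' i + d * (\<Sum>k''=k..k'. G k'' i)"
    using g_cost_jensen_bound[OF J k] unfolding lhs_def rhs_def by metis
  then obtain d where d: "\<And>k' i. k' \<in> {k..K} \<Longrightarrow> i < m \<Longrightarrow>
      \<bar>d k' i\<bar> \<le> L \<and> lhs k' i \<le> rhs k' i + d k' i * (\<Sum>k''=k..k'. G k'' i)"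
    unfolding choice_iff by blast
  define lam where "lam k'' i = (\<Sum>k'=k''..K. d k' i)" for k'' i
  show ?thesis
  proof
    fix k'' i assume "k'' \<in> {k..K}" "i < m"
    then show "\<bar>lam k'' i\<bar> \<le> real K * L"
      unfolding lam_def using d k by (intro abs_sum_atLeastAtMost_le) auto
  next
    have "(\<Sum>k'=k..K. \<Sum>i<m. lhs k' i) \<le> (\<Sum>k'=k..K. \<Sum>i<m. rhs k' i + d k' i * (\<Sum>k''=k..k'. G k'' i))"
      using d by (intro sum_mono) blast
    also have "\<dots> = (\<Sum>k'=k..K. \<Sum>i<m. rhs k' i) + (\<Sum>i<m. \<Sum>k'=k..K. d k' i * (\<Sum>k''=k..k'. G k'' i))"
      by (simp only: sum.distrib sum.swap[of _ "{k..K}" "{..<m}"])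
    also have "(\<Sum>i<m. \<Sum>k'=k..K. d k' i * (\<Sum>k''=k..k'. G k'' i))
        = (\<Sum>k''=k..K. \<Sum>i<m. \<Sum>t\<in>epoch k. lam k'' i * (x_at J t k'' i - a_at J t k'' i))"
    proof -
      have "(\<Sum>i<m. \<Sum>k'=k..K. d k' i * (\<Sum>k''=k..k'. G k'' i)) = (\<Sum>i<m. \<Sum>k''=k..K. G k'' i * lam k'' i)"
        by (simp only: sum_times_partial_sums_swap lam_def)
      also have "\<dots> = (\<Sum>k''=k..K. \<Sum>i<m. G k'' i * lam k'' i)" by (rule sum.swap)
      also have "\<dots> = (\<Sum>k''=k..K. \<Sum>i<m. \<Sum>t\<in>epoch k. lam k'' i * (x_at J t k'' i - a_at J t k'' i))"
        unfolding G_def by (simp add: sum_distrib_left mult.commute)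
      finally show ?thesis .
    qed
    also have "(\<Sum>k'=k..K. \<Sum>i<m. rhs k' i) = (\<Sum>t\<in>epoch k. \<Sum>k'=k..K. \<Sum>i<m.
        real k' * g k' i (z_start J k i / (real k' * real N) + (\<Sum>k''=k..k'. a_at J t k'' i) / real k'))"
      unfolding rhs_def by (rule sum_swap3)
    also have "\<dots> = (\<Sum>t\<in>epoch k. box_min k (z_start J k) (mu_at J t)
        - (\<Sum>k''=k..K. \<Sum>i<m. mu_at J t k'' i * a_at J t k'' i))"
      using g_cost_at_a_at_eq[OF J k] by simp
    finally show "(\<Sum>k'=k..K. \<Sum>i<m. real N * (real k' *
            g k' i ((z_start J k i + (\<Sum>t\<in>epoch k. \<Sum>k''=k..k'. x_at J t k'' i)) / (real k' * real N))))
      \<le> (\<Sum>t\<in>epoch k. box_min k (z_start J k) (mu_at J t) - (\<Sum>k''=k..K. \<Sum>i<m. mu_at J t k'' i * a_at J t k'' i))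
        + (\<Sum>k''=k..K. \<Sum>i<m. \<Sum>t\<in>epoch k. lam k'' i * (x_at J t k'' i - a_at J t k'' i))"
      by (simp only: lhs_def)
  qed
qed

lemma proxy_V_le_dual_plus_gaps:
  assumes J: "valid_arrivals J" and k: "k \<in> {1..K}"
  obtains lam where "\<And>k'' i. k'' \<in> {k..K} \<Longrightarrow> i < m \<Longrightarrow> \<bar>lam k'' i\<bar> \<le> real K * L"
    and "proxy_V m n K T c g mu1 eta selX selA J k (z_start J k)
      \<le> (\<Sum>t\<in>epoch k. dual_value k (z_start J k) (mu_at J t) (J t))
        + (\<Sum>k''=k..K. \<Sum>i<m. \<Sum>t\<in>epoch k. (mu_at J t k'' i + lam k'' i) * (x_at J t k'' i - a_at J t k'' i))"
proof -
  obtain lam where lam: "\<And>k'' i. k'' \<in> {k..K} \<Longrightarrow> i < m \<Longrightarrow> \<bar>lam k'' i\<bar> \<le> real K * L"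
    and g_part: "(\<Sum>k'=k..K. \<Sum>i<m. real N * (real k' *
            g k' i ((z_start J k i + (\<Sum>t\<in>epoch k. \<Sum>k''=k..k'. x_at J t k'' i)) / (real k' * real N))))
      \<le> (\<Sum>t\<in>epoch k. box_min k (z_start J k) (mu_at J t) - (\<Sum>k''=k..K. \<Sum>i<m. mu_at J t k'' i * a_at J t k'' i))
        + (\<Sum>k''=k..K. \<Sum>i<m. \<Sum>t\<in>epoch k. lam k'' i * (x_at J t k'' i - a_at J t k'' i))"
    using proxy_g_cost_le[OF J k] by blast
  have cost: "(\<Sum>t\<in>epoch k. \<Sum>k''=k..K. \<Sum>i<m. c (J t) i * x_at J t k'' i)
      = (\<Sum>t\<in>epoch k. \<Sum>k''=k..K. lin_min (J t) (\<lambda>i. c (J t) i - mu_at J t k'' i))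
        + (\<Sum>t\<in>epoch k. \<Sum>k''=k..K. \<Sum>i<m. mu_at J t k'' i * x_at J t k'' i)"
    using linear_cost_eq_lin_min[OF J k] by (simp add: sum.distrib)
  have dual: "(\<Sum>t\<in>epoch k. dual_value k (z_start J k) (mu_at J t) (J t))
      = (\<Sum>t\<in>epoch k. \<Sum>k''=k..K. lin_min (J t) (\<lambda>i. c (J t) i - mu_at J t k'' i))
        + (\<Sum>t\<in>epoch k. box_min k (z_start J k) (mu_at J t))"
    by (simp add: dual_value_def sum.distrib)
  have "(\<Sum>k''=k..K. \<Sum>i<m. \<Sum>t\<in>epoch k. mu_at J t k'' i * (x_at J t k'' i - a_at J t k'' i))
      = (\<Sum>t\<in>epoch k. \<Sum>k''=k..K. \<Sum>i<m. mu_at J t k'' i * x_at J t k'' i)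
        - (\<Sum>t\<in>epoch k. \<Sum>k''=k..K. \<Sum>i<m. mu_at J t k'' i * a_at J t k'' i)"
    by (subst sum_swap3) (simp only: right_diff_distrib sum_subtractf)
  then have gaps: "(\<Sum>k''=k..K. \<Sum>i<m. \<Sum>t\<in>epoch k. (mu_at J t k'' i + lam k'' i) * (x_at J t k'' i - a_at J t k'' i))
      = (\<Sum>t\<in>epoch k. \<Sum>k''=k..K. \<Sum>i<m. mu_at J t k'' i * x_at J t k'' i)
        - (\<Sum>t\<in>epoch k. \<Sum>k''=k..K. \<Sum>i<m. mu_at J t k'' i * a_at J t k'' i)
        + (\<Sum>k''=k..K. \<Sum>i<m. \<Sum>t\<in>epoch k. lam k'' i * (x_at J t k'' i - a_at J t k'' i))"
    by (simp only: distrib_right sum.distrib)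
  have "(\<Sum>t\<in>epoch k. box_min k (z_start J k) (mu_at J t) - (\<Sum>k''=k..K. \<Sum>i<m. mu_at J t k'' i * a_at J t k'' i))
      = (\<Sum>t\<in>epoch k. box_min k (z_start J k) (mu_at J t))
        - (\<Sum>t\<in>epoch k. \<Sum>k''=k..K. \<Sum>i<m. mu_at J t k'' i * a_at J t k'' i)"
    by (rule sum_subtractf)
  with g_part have "proxy_V m n K T c g mu1 eta selX selA J k (z_start J k)
      \<le> (\<Sum>t\<in>epoch k. dual_value k (z_start J k) (mu_at J t) (J t))
        + (\<Sum>k''=k..K. \<Sum>i<m. \<Sum>t\<in>epoch k. (mu_at J t k'' i + lam k'' i) * (x_at J t k'' i - a_at J t k'' i))"
    unfolding proxy_V_eq[OF J k] cost dual gaps by linarith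
  with lam show ?thesis by (rule that)
qed

lemma gap_coordinate_bound:
  assumes J: "valid_arrivals J" and k: "k \<in> {1..K}" and "k \<le> k''"
  shows "(\<Sum>t\<in>epoch k. (mu_at J t k'' i + lam) * (x_at J t k'' i - a_at J t k'' i))
       \<le> (mu1 k'' i + lam)\<^sup>2 / (2 * eta) + eta / 2 * real N"
proof -
  define s where "s = (k - 1) * N + 1"
  have E: "epoch k = {s..<s+N}" unfolding s_def using epoch_eq[OF k] .
  \<comment> \<open>past the last period of the epoch, continue the dual sequence by one more gradient step\<close>
  define mu where "mu t = (if t \<in> epoch k then mu_at J t k'' i
    else mu_at J (t - 1) k'' i + eta * (a_at J (t - 1) k'' i - x_at J (t - 1) k'' i))" for t
  have "mu (Suc t) = mu t + eta * (a_at J t k'' i - x_at J t k'' i)" if "t \<in> {s..<s+N}" for t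
    using mu_at_step[OF k _ _ \<open>k \<le> k''\<close>] that unfolding mu_def E by auto
  then have "(\<Sum>t\<in>{s..<s+N}. (mu t - (- lam)) * (x_at J t k'' i - a_at J t k'' i))
      \<le> (mu s - (- lam))\<^sup>2 / (2 * eta) + eta / 2 * (\<Sum>t\<in>{s..<s+N}. (a_at J t k'' i - x_at J t k'' i)\<^sup>2)"
    by (intro gradient_step_regret[OF eta_pos])
  moreover have "(\<Sum>t\<in>{s..<s+N}. (a_at J t k'' i - x_at J t k'' i)\<^sup>2) \<le> (\<Sum>t\<in>{s..<s+N}. 1)"
  proof (intro sum_mono)
    fix t assume "t \<in> {s..<s+N}"
    then have "t \<in> epoch k" using E by simp
    then have "0 \<le> a_at J t k'' i" "a_at J t k'' i \<le> 1" "0 \<le> x_at J t k'' i" "x_at J t k'' i \<le> 1"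
      using a_at_minimizes(1)[OF J k] x_at_bounds[OF J k] by (auto simp: unit_box_def)
    then have "\<bar>a_at J t k'' i - x_at J t k'' i\<bar> \<le> 1" by linarith
    then show "(a_at J t k'' i - x_at J t k'' i)\<^sup>2 \<le> 1" by (simp add: abs_square_le_1)
  qed
  then have "eta / 2 * (\<Sum>t\<in>{s..<s+N}. (a_at J t k'' i - x_at J t k'' i)\<^sup>2) \<le> eta / 2 * real N"
    using eta_pos by (intro mult_left_mono) auto
  moreover have "mu s = mu1 k'' i"
    using epoch_start_mem[OF k] mu_at_epoch_start[OF k \<open>k \<le> k''\<close>] unfolding mu_def s_def by simp
  moreover have "(\<Sum>t\<in>{s..<s+N}. (mu t - (- lam)) * (x_at J t k'' i - a_at J t k'' i))
      = (\<Sum>t\<in>epoch k. (mu_at J t k'' i + lam) * (x_at J t k'' i - a_at J t k'' i))"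
    unfolding E[symmetric] by (intro sum.cong) (auto simp: mu_def)
  ultimately show ?thesis by simp
qed

definition "dual_radius = (\<Sum>k''=1..K. \<Sum>i<m. (mu1 k'' i)\<^sup>2 + (real K * L)\<^sup>2)"

lemma proxy_V_le_dual:
  assumes J: "valid_arrivals J" and k: "k \<in> {1..K}"
  shows "proxy_V m n K T c g mu1 eta selX selA J k (z_start J k)
     \<le> (\<Sum>t\<in>epoch k. dual_value k (z_start J k) (mu_at J t) (J t))
       + dual_radius / eta + real K * real m * (eta * real N / 2)"
proof -
  obtain lam where lam: "\<And>k'' i. k'' \<in> {k..K} \<Longrightarrow> i < m \<Longrightarrow> \<bar>lam k'' i\<bar> \<le> real K * L"
    and V: "proxy_V m n K T c g mu1 eta selX selA J k (z_start J k)
      \<le> (\<Sum>t\<in>epoch k. dual_value k (z_start J k) (mu_at J t) (J t))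
        + (\<Sum>k''=k..K. \<Sum>i<m. \<Sum>t\<in>epoch k. (mu_at J t k'' i + lam k'' i) * (x_at J t k'' i - a_at J t k'' i))"
    using proxy_V_le_dual_plus_gaps[OF J k] by blast
  have "(\<Sum>k''=k..K. \<Sum>i<m. \<Sum>t\<in>epoch k. (mu_at J t k'' i + lam k'' i) * (x_at J t k'' i - a_at J t k'' i))
      \<le> (\<Sum>k''=k..K. \<Sum>i<m. ((mu1 k'' i)\<^sup>2 + (real K * L)\<^sup>2) / eta + eta / 2 * real N)"
  proof (intro sum_mono)
    fix k'' i assume k'': "k'' \<in> {k..K}" and i: "i \<in> {..<m}"
    have "(mu1 k'' i + lam k'' i)\<^sup>2 / (2 * eta) \<le> ((mu1 k'' i)\<^sup>2 + (real K * L)\<^sup>2) / eta"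
      using k'' i by (intro square_sum_div_le[OF eta_pos lam]) auto
    then show "(\<Sum>t\<in>epoch k. (mu_at J t k'' i + lam k'' i) * (x_at J t k'' i - a_at J t k'' i))
        \<le> ((mu1 k'' i)\<^sup>2 + (real K * L)\<^sup>2) / eta + eta / 2 * real N"
      using gap_coordinate_bound[OF J k, of k'' i "lam k'' i"] k'' by auto
  qed
  also have "\<dots> = (\<Sum>k''=k..K. \<Sum>i<m. (mu1 k'' i)\<^sup>2 + (real K * L)\<^sup>2) / eta
      + real (Suc K - k) * real m * (eta * real N / 2)"
  proof -
    have "(\<Sum>k''=k..K. \<Sum>i<m. eta / 2 * real N) = real (Suc K - k) * real m * (eta * real N / 2)"
      by simp
    moreover define r where "r k'' i = (mu1 k'' i)\<^sup>2 + (real K * L)\<^sup>2" for k'' i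
    ultimately show ?thesis unfolding r_def[symmetric] by (simp only: sum.distrib sum_divide_distrib)
  qed
  also have "\<dots> \<le> dual_radius / eta + real K * real m * (eta * real N / 2)"
  proof (intro add_mono divide_right_mono mult_right_mono)
    show "(\<Sum>k''=k..K. \<Sum>i<m. (mu1 k'' i)\<^sup>2 + (real K * L)\<^sup>2) \<le> dual_radius"
      unfolding dual_radius_def using k by (intro sum_mono2) (auto intro!: sum_nonneg)
  qed (use k eta_pos in auto)
  finally show ?thesis using V by linarith
qed

section \<open>Weak duality\<close>

lemma arrivals_in_epoch_eq: "real (arrivals_in_epoch K T J k j) = (\<Sum>t\<in>epoch k. if J t = j then 1 else 0)"
  unfolding arrivals_in_epoch_def by (simp add: sum.If_cases[OF finite_epoch] Int_def conj_commute)

lemma sum_epoch_by_type: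
  assumes "valid_arrivals J" "k \<in> {1..K}"
  shows "(\<Sum>t\<in>epoch k. f (J t)) = (\<Sum>j<n. real (arrivals_in_epoch K T J k j) * f j)"
proof -
  have "(\<Sum>j<n. real (arrivals_in_epoch K T J k j) * f j) = (\<Sum>j<n. \<Sum>t\<in>epoch k. if J t = j then f j else 0)"
    unfolding arrivals_in_epoch_eq by (simp add: sum_distrib_right if_distrib[where f="\<lambda>x. x * _"] cong: if_cong)
  also have "\<dots> = (\<Sum>t\<in>epoch k. \<Sum>j<n. if J t = j then f j else 0)" by (rule sum.swap)
  also have "\<dots> = (\<Sum>t\<in>epoch k. f (J t))"
    using arrival_type_lt[OF assms] by simp
  finally show ?thesis by simp
qed

lemma sum_arrivals_in_epoch:
  "valid_arrivals J \<Longrightarrow> k \<in> {1..K} \<Longrightarrow> (\<Sum>j<n. real (arrivals_in_epoch K T J k j)) = real N"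
  using sum_epoch_by_type[of J k "\<lambda>_. 1"] by (simp add: card_epoch)

lemma offline_feasibleD:
  assumes "Z \<in> offline_feasible m n K T S J k"
  shows "Z k' j i \<noteq> 0 \<Longrightarrow> k \<le> k' \<and> k' \<le> K \<and> j < n \<and> i \<in> S j"
    and "k' \<in> {k..K} \<Longrightarrow> j < n \<Longrightarrow> (\<Sum>i<m. Z k' j i) \<le> arrivals_in_epoch K T J k j"
  using assms unfolding offline_feasible_def by blast+

lemma arrivals_lin_min_le:
  assumes Z: "Z \<in> offline_feasible m n K T S J k" and k': "k' \<in> {k..K}" and j: "j < n"
  shows "real (arrivals_in_epoch K T J k j) * lin_min j r \<le> (\<Sum>i<m. r i * real (Z k' j i))"
proof -
  have "real (arrivals_in_epoch K T J k j) * lin_min j r \<le> real (\<Sum>i<m. Z k' j i) * lin_min j r"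
    using offline_feasibleD(2)[OF Z k' j] lin_min_nonpos[OF j] by (intro mult_right_mono_neg) (simp_all only: of_nat_le_iff)
  also have "\<dots> = (\<Sum>i<m. real (Z k' j i) * lin_min j r)" by (simp add: sum_distrib_right)
  also have "\<dots> \<le> (\<Sum>i<m. r i * real (Z k' j i))"
  proof (intro sum_mono)
    fix i
    show "real (Z k' j i) * lin_min j r \<le> r i * real (Z k' j i)"
      using offline_feasibleD(1)[OF Z] lin_min_le_entry[OF j] by (cases "Z k' j i = 0") (auto simp: mult.commute)
  qed
  finally show ?thesis .
qed

definition "offline_point k Z =
  (\<lambda>k'' i. if k \<le> k'' \<and> k'' \<le> K then (\<Sum>j<n. real (Z k'' j i)) / real N else 0)"

lemma offline_point_unit_box:
  assumes J: "valid_arrivals J" and k: "k \<in> {1..K}" and Z: "Z \<in> offline_feasible m n K T S J k"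
  shows "offline_point k Z \<in> unit_box"
proof -
  have "(\<Sum>j<n. real (Z k'' j i)) \<le> real N" if "k'' \<in> {k..K}" for k'' i
  proof -
    have "real (Z k'' j i) \<le> real (arrivals_in_epoch K T J k j)" if j: "j < n" for j
    proof (cases "Z k'' j i = 0")
      case False
      then have "i < m" using offline_feasibleD(1)[OF Z] S_sub j by blast
      then have "Z k'' j i \<le> (\<Sum>i'<m. Z k'' j i')" by (intro member_le_sum) auto
      then show ?thesis using offline_feasibleD(2)[OF Z \<open>k'' \<in> {k..K}\<close> j] by simp
    qed simp
    then have "(\<Sum>j<n. real (Z k'' j i)) \<le> (\<Sum>j<n. real (arrivals_in_epoch K T J k j))"
      by (intro sum_mono) auto
    then show ?thesis using sum_arrivals_in_epoch[OF J k] by simp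
  qed
  then show ?thesis
    using N_pos by (auto simp: unit_box_def offline_point_def divide_le_eq intro!: divide_nonneg_nonneg sum_nonneg)
qed

lemma a_objective_offline_point:
  assumes k: "k \<in> {1..K}"
  shows "real N * a_objective m K T g k z mu (offline_point k Z)
     = (\<Sum>k'=k..K. \<Sum>i<m. real N * (real k' *
          g k' i ((z i + (\<Sum>j<n. \<Sum>k''=k..k'. real (Z k'' j i))) / (real k' * real N))))
       + (\<Sum>k'=k..K. \<Sum>i<m. mu k' i * (\<Sum>j<n. real (Z k' j i)))"
proof -
  have arg: "z i / (real k' * real N) + (\<Sum>k''=k..k'. offline_point k Z k'' i) / real k'
      = (z i + (\<Sum>j<n. \<Sum>k''=k..k'. real (Z k'' j i))) / (real k' * real N)" if "k' \<in> {k..K}" for k' i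
  proof -
    have "(\<Sum>k''=k..k'. offline_point k Z k'' i) = (\<Sum>j<n. \<Sum>k''=k..k'. real (Z k'' j i)) / real N"
      using that by (simp add: offline_point_def sum_divide_distrib[symmetric] sum.swap[of _ "{k..k'}"])
    then show ?thesis using that N_pos k by (simp add: field_simps)
  qed
  have "real N * (\<Sum>k'=k..K. \<Sum>i<m. mu k' i * offline_point k Z k' i)
      = (\<Sum>k'=k..K. \<Sum>i<m. real N * (mu k' i * offline_point k Z k' i))"
    by (simp add: sum_distrib_left)
  also have "\<dots> = (\<Sum>k'=k..K. \<Sum>i<m. mu k' i * (\<Sum>j<n. real (Z k' j i)))"
    using N_pos by (intro sum.cong refl) (simp add: offline_point_def)
  finally have mu_part: "real N * (\<Sum>k'=k..K. \<Sum>i<m. mu k' i * offline_point k Z k' i)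
      = (\<Sum>k'=k..K. \<Sum>i<m. mu k' i * (\<Sum>j<n. real (Z k' j i)))" .
  have g_part: "real N * (\<Sum>k'=k..K. real k' * (\<Sum>i<m. g k' i (z i / (real k' * real N)
        + (\<Sum>k''=k..k'. offline_point k Z k'' i) / real k')))
      = (\<Sum>k'=k..K. \<Sum>i<m. real N * (real k' *
          g k' i ((z i + (\<Sum>j<n. \<Sum>k''=k..k'. real (Z k'' j i))) / (real k' * real N))))"
    unfolding sum_distrib_left by (intro sum.cong refl) (simp add: arg sum_distrib_left)
  show ?thesis unfolding a_objective_def scaled_T_div_K distrib_left mu_part g_part ..
qed

lemma offline_cost_split:
  "(\<Sum>j<n. \<Sum>i<m. c j i * (\<Sum>k'=k..K. real (Z k' j i)))
     = (\<Sum>k'=k..K. \<Sum>j<n. \<Sum>i<m. (c j i - mu k' i) * real (Z k' j i))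
       + (\<Sum>k'=k..K. \<Sum>i<m. mu k' i * (\<Sum>j<n. real (Z k' j i)))"
proof -
  have "(\<Sum>j<n. \<Sum>i<m. c j i * (\<Sum>k'=k..K. real (Z k' j i))) = (\<Sum>k'=k..K. \<Sum>j<n. \<Sum>i<m. c j i * real (Z k' j i))"
    by (simp add: sum_distrib_left sum.swap[of _ "{k..K}"])
  also have "\<dots> = (\<Sum>k'=k..K. \<Sum>j<n. \<Sum>i<m. (c j i - mu k' i) * real (Z k' j i))
      + (\<Sum>k'=k..K. \<Sum>j<n. \<Sum>i<m. mu k' i * real (Z k' j i))"
    by (simp add: sum.distrib[symmetric] algebra_simps)
  also have "(\<Sum>k'=k..K. \<Sum>j<n. \<Sum>i<m. mu k' i * real (Z k' j i)) = (\<Sum>k'=k..K. \<Sum>i<m. mu k' i * (\<Sum>j<n. real (Z k' j i)))"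
    by (rule sum.cong[OF refl]) (simp add: sum_distrib_left sum.swap[of _ "{..<n}"])
  finally show ?thesis .
qed

lemma epoch_dual_le_offline_obj:
  assumes J: "valid_arrivals J" and k: "k \<in> {1..K}" and z: "admissible_start k z"
    and Z: "Z \<in> offline_feasible m n K T S J k"
  shows "(\<Sum>t\<in>epoch k. dual_value k z mu (J t)) \<le> offline_obj m n K T c g k z Z"
proof -
  have dual_eq: "(\<Sum>t\<in>epoch k. dual_value k z mu (J t))
      = (\<Sum>t\<in>epoch k. \<Sum>k'=k..K. lin_min (J t) (\<lambda>i. c (J t) i - mu k' i)) + real N * box_min k z mu"
    by (simp add: dual_value_def sum.distrib card_epoch[OF k])
  have "(\<Sum>t\<in>epoch k. \<Sum>k'=k..K. lin_min (J t) (\<lambda>i. c (J t) i - mu k' i))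
      = (\<Sum>j<n. real (arrivals_in_epoch K T J k j) * (\<Sum>k'=k..K. lin_min j (\<lambda>i. c j i - mu k' i)))"
    by (rule sum_epoch_by_type[OF J k])
  also have "\<dots> = (\<Sum>k'=k..K. \<Sum>j<n. real (arrivals_in_epoch K T J k j) * lin_min j (\<lambda>i. c j i - mu k' i))"
    by (simp add: sum_distrib_left sum.swap[of _ "{..<n}"])
  also have "\<dots> \<le> (\<Sum>k'=k..K. \<Sum>j<n. \<Sum>i<m. (c j i - mu k' i) * real (Z k' j i))"
    by (intro sum_mono arrivals_lin_min_le[OF Z]) auto
  finally have lin_le: "(\<Sum>t\<in>epoch k. \<Sum>k'=k..K. lin_min (J t) (\<lambda>i. c (J t) i - mu k' i))
      \<le> (\<Sum>k'=k..K. \<Sum>j<n. \<Sum>i<m. (c j i - mu k' i) * real (Z k' j i))" .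
  have box_le: "real N * box_min k z mu \<le> real N * a_objective m K T g k z mu (offline_point k Z)"
    using box_min_le[OF z k offline_point_unit_box[OF J k Z]] by (intro mult_left_mono) auto
  have "(\<Sum>k'=k..K. \<Sum>j<n. \<Sum>i<m. (c j i - mu k' i) * real (Z k' j i))
      + real N * a_objective m K T g k z mu (offline_point k Z) = offline_obj m n K T c g k z Z"
    unfolding a_objective_offline_point[OF k] offline_obj_def offline_cost_split[of _ _ mu]
      scaled_T_div_K T_div_K by (simp add: sum_distrib_left)
  then show ?thesis using dual_eq lin_le box_le by linarith
qed

lemma epoch_dual_le_proxy_off:
  assumes J: "valid_arrivals J" and k: "k \<in> {1..K}" and z: "admissible_start k z"
  shows "(\<Sum>t\<in>epoch k. dual_value k z mu (J t)) \<le> proxy_off m n K T c S g J k z"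
  unfolding proxy_off_def
proof (rule cINF_greatest)
  show "offline_feasible m n K T S J k \<noteq> {}" by (auto simp: offline_feasible_def intro!: exI[of _ "\<lambda>_ _ _. 0"])
qed (rule epoch_dual_le_offline_obj[OF assms])

section \<open>The proxy decisions as an offline solution\<close>

definition "proxy_count J k k'' j i = (if k \<le> k'' \<and> k'' \<le> K \<and> j < n \<and> i \<in> S j
     then card {t\<in>epoch k. J t = j \<and> x_at J t k'' i = 1} else 0)"

lemma real_proxy_count:
  assumes J: "valid_arrivals J" and k: "k \<in> {1..K}" and k'': "k'' \<in> {k..K}"
  shows "real (proxy_count J k k'' j i) = (\<Sum>t\<in>epoch k. if J t = j then x_at J t k'' i else 0)"
proof (cases "j < n \<and> i \<in> S j")
  case True
  have "x_at J t k'' i = 0 \<or> x_at J t k'' i = 1" if "t \<in> epoch k" for t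
    using x_at_feasX[OF J] epoch_subset[OF k] that unfolding feasX_def by blast
  then have "(\<Sum>t\<in>epoch k. if J t = j \<and> x_at J t k'' i = 1 then 1 else 0)
      = (\<Sum>t\<in>epoch k. if J t = j then x_at J t k'' i else (0::real))"
    by (intro sum.cong) auto
  then show ?thesis using True k''
    by (simp add: proxy_count_def sum.If_cases[OF finite_epoch] Int_def)
next
  case False
  have "x_at J t k'' i = 0" if "t \<in> epoch k" "J t = j" for t
    using x_at_feasX[OF J] epoch_subset[OF k] arrival_type_lt[OF J k] False that
    unfolding feasX_def by blast
  then show ?thesis using False by (auto simp: proxy_count_def intro!: sum.neutral)
qed

lemma proxy_count_feasible:
  assumes J: "valid_arrivals J" and k: "k \<in> {1..K}"
  shows "proxy_count J k \<in> offline_feasible m n K T S J k"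
  unfolding offline_feasible_def mem_Collect_eq
proof (intro conjI allI ballI impI)
  fix k' j assume k': "k' \<in> {k..K}" and "j < n"
  have "real (\<Sum>i<m. proxy_count J k k' j i) = (\<Sum>t\<in>epoch k. if J t = j then (\<Sum>i<m. x_at J t k' i) else 0)"
    using real_proxy_count[OF J k k'] by (simp add: sum.swap[of _ "epoch k"]) (intro sum.cong refl, simp)
  also have "\<dots> \<le> (\<Sum>t\<in>epoch k. if J t = j then 1 else 0)"
    using x_at_feasX[OF J] epoch_subset[OF k] by (intro sum_mono) (auto simp: feasX_def)
  also have "\<dots> = real (arrivals_in_epoch K T J k j)" by (rule arrivals_in_epoch_eq[symmetric])
  finally show "(\<Sum>i<m. proxy_count J k k' j i) \<le> arrivals_in_epoch K T J k j" by linarith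
qed (auto simp: proxy_count_def split: if_splits)

lemma proxy_off_le_proxy_V:
  assumes J: "valid_arrivals J" and k: "k \<in> {1..K}" and z: "admissible_start k z"
  shows "proxy_off m n K T c S g J k z \<le> proxy_V m n K T c g mu1 eta selX selA J k z"
proof -
  have "proxy_Z m K T c g mu1 eta selX selA J k k k2 j i = (\<Sum>k''=k..k2. real (proxy_count J k k'' j i))"
    if "k2 \<le> K" for k2 j i
    using that real_proxy_count[OF J k] by (simp add: proxy_Z_eq sum.swap[of _ "epoch k"])
  then have "offline_obj m n K T c g k z (proxy_count J k) = proxy_V m n K T c g mu1 eta selX selA J k z"
    unfolding offline_obj_def proxy_V_def by simp
  moreover have "bdd_below (offline_obj m n K T c g k z ` offline_feasible m n K T S J k)"
    using epoch_dual_le_offline_obj[OF J k z] by (auto simp: bdd_below_def)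
  ultimately show ?thesis
    unfolding proxy_off_def by (metis cINF_lower proxy_count_feasible[OF J k])
qed

end

section \<open>Expectation over i.i.d. arrivals\<close>

locale dgd_iid = dgd_run +
  fixes P :: "nat pmf"
  assumes P_supp: "set_pmf P \<subseteq> {..<n}"
begin

abbreviation arrivals where "arrivals \<equiv> Pi_pmf {1..T} 0 (\<lambda>_. P)"

lemma finite_set_P: "finite (set_pmf P)"
  using P_supp finite_subset by blast

lemma integrable_arrivals: "integrable (measure_pmf arrivals) (f :: _ \<Rightarrow> real)"
  by (rule integrable_measure_pmf_finite[OF finite_set_Pi_pmf[OF _ finite_set_P]]) simp

lemma integrable_P: "integrable (measure_pmf P) (f :: _ \<Rightarrow> real)"
  by (rule integrable_measure_pmf_finite[OF finite_set_P])

lemma valid_arrivals_support: "J \<in> set_pmf arrivals \<Longrightarrow> valid_arrivals J"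
  using set_Pi_pmf_subset'[of "{1..T}" 0 "\<lambda>_. P"] P_supp
  by (fastforce simp: valid_arrivals_def PiE_dflt_def)

lemma z_start_fun_upd: "k \<in> {1..K} \<Longrightarrow> t \<in> epoch k \<Longrightarrow> z_start (J(t := y)) k = z_start J k"
  unfolding z_start_def usage_eq_state by (subst state_at_cong[of _ "J(t := y)" J]) (auto simp: epoch_eq)

lemma mu_at_fun_upd: "k \<in> {1..K} \<Longrightarrow> t \<in> epoch k \<Longrightarrow> mu_at (J(t := y)) t = mu_at J t"
proof -
  assume "k \<in> {1..K}" "t \<in> epoch k"
  then obtain t' where t': "t = Suc t'" by (cases t) (auto simp: epoch_periods_def)
  have "state_at (J(t := y)) t' = state_at J t'" by (rule state_at_cong) (use t' in auto)
  then show ?thesis unfolding t' mu_at_Suc by (simp cong: if_cong)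
qed

definition "mean_dual k z mu = measure_pmf.expectation P (dual_value k z mu)"

text \<open>The dual variables and the usage at the start of the epoch are fixed before \<open>J t\<close> arrives.\<close>

lemma expectation_dual_value:
  assumes k: "k \<in> {1..K}" and t: "t \<in> epoch k" and M: "\<And>J y. M (J(t := y)) = M J"
  shows "measure_pmf.expectation arrivals (\<lambda>J. dual_value k (z_start J k) (M J) (J t))
       = measure_pmf.expectation arrivals (\<lambda>J. mean_dual k (z_start J k) (M J))"
  unfolding mean_dual_def
  using expectation_Pi_pmf_coordinate[OF _ _ finite_set_P, where F="\<lambda>J. (z_start J k, M J)"
      and G="\<lambda>y p. dual_value k (fst p) (snd p) y" and A="{1..T}" and d=0] t epoch_subset[OF k]
  by (auto simp: z_start_fun_upd[OF k t] M)

lemma mean_dual_le: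
  assumes "admissible_start k z" "k \<in> {1..K}"
  shows "mean_dual k z mu \<le> a_objective m K T g k z (\<lambda>_ _. 0) (\<lambda>_ _. 0)"
proof -
  have "dual_value k z mu j \<le> a_objective m K T g k z (\<lambda>_ _. 0) (\<lambda>_ _. 0)" if "j \<in> set_pmf P" for j
  proof -
    have "(\<Sum>k''=k..K. lin_min j (\<lambda>i. c j i - mu k'' i)) \<le> 0"
      using lin_min_nonpos P_supp that by (intro sum_nonpos) auto
    moreover have "box_min k z mu \<le> a_objective m K T g k z (\<lambda>_ _. 0) (\<lambda>_ _. 0)"
      using box_min_le[OF assms, of "\<lambda>_ _. 0" mu] by (simp add: unit_box_def a_objective_def)
    ultimately show ?thesis by (simp add: dual_value_def)
  qed
  then show ?thesis unfolding mean_dual_def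
    using integral_mono_AE[OF integrable_P integrable_P, of "dual_value k z mu" "\<lambda>_. _"]
    by (simp add: AE_measure_pmf_iff)
qed

definition "sup_dual k z = (SUP mu. mean_dual k z mu)"

lemma mean_dual_le_sup_dual:
  "admissible_start k z \<Longrightarrow> k \<in> {1..K} \<Longrightarrow> mean_dual k z mu \<le> sup_dual k z"
  unfolding sup_dual_def by (rule cSUP_upper) (use mean_dual_le in \<open>auto simp: bdd_above_def\<close>)

text \<open>A fixed near-maximiser of the mean dual function, chosen from the start-of-epoch usage
  alone, is independent of the arrivals of the epoch; weak duality then applies to it
  arrival by arrival.\<close>

lemma expected_sup_dual_le_offline:
  assumes k: "k \<in> {1..K}"
  shows "measure_pmf.expectation arrivals (\<lambda>J. real N * sup_dual k (z_start J k))
       \<le> measure_pmf.expectation arrivals (\<lambda>J. proxy_off m n K T c S g J k (z_start J k))"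
proof (rule field_le_epsilon)
  fix e :: real assume "0 < e"
  have "\<exists>mu. sup_dual k z - e / real N < mean_dual k z mu" if z: "admissible_start k z" for z
  proof -
    have "sup_dual k z - e / real N < sup_dual k z" using \<open>0 < e\<close> N_pos by simp
    then show ?thesis
      unfolding sup_dual_def using mean_dual_le[OF z k]
      by (subst (asm) less_cSUP_iff) (auto simp: bdd_above_def)
  qed
  then have "\<forall>z. \<exists>mu. admissible_start k z \<longrightarrow> sup_dual k z - e / real N < mean_dual k z mu" by blast
  then obtain M where M: "\<And>z. admissible_start k z \<Longrightarrow> sup_dual k z - e / real N < mean_dual k z (M z)"
    unfolding choice_iff by blast
  have "measure_pmf.expectation arrivals (\<lambda>J. real N * sup_dual k (z_start J k))
      \<le> measure_pmf.expectation arrivals (\<lambda>J. (\<Sum>t\<in>epoch k. mean_dual k (z_start J k) (M (z_start J k))) + e)"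
  proof (rule integral_mono_AE[OF integrable_arrivals integrable_arrivals], unfold AE_measure_pmf_iff, intro ballI)
    fix J assume "J \<in> set_pmf arrivals"
    then have "sup_dual k (z_start J k) < mean_dual k (z_start J k) (M (z_start J k)) + e / real N"
      using M z_start_admissible[OF valid_arrivals_support k] by fastforce
    then show "real N * sup_dual k (z_start J k)
        \<le> (\<Sum>t\<in>epoch k. mean_dual k (z_start J k) (M (z_start J k))) + e"
      using N_pos by (simp add: card_epoch[OF k] field_simps)
  qed
  also have "\<dots> = measure_pmf.expectation arrivals
      (\<lambda>J. \<Sum>t\<in>epoch k. mean_dual k (z_start J k) (M (z_start J k))) + e"
    by (subst Bochner_Integration.integral_add[OF integrable_arrivals integrable_arrivals]) simp
  also have "\<dots> = measure_pmf.expectation arrivals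
      (\<lambda>J. \<Sum>t\<in>epoch k. dual_value k (z_start J k) (M (z_start J k)) (J t)) + e"
    unfolding Bochner_Integration.integral_sum[OF integrable_arrivals]
    by (intro arg_cong[where f="\<lambda>x. x + e"] sum.cong refl expectation_dual_value[OF k, symmetric])
      (auto simp: z_start_fun_upd[OF k])
  also have "\<dots> \<le> measure_pmf.expectation arrivals (\<lambda>J. proxy_off m n K T c S g J k (z_start J k)) + e"
    by (intro add_right_mono integral_mono_AE[OF integrable_arrivals integrable_arrivals])
      (auto simp: AE_measure_pmf_iff intro!: epoch_dual_le_proxy_off z_start_admissible valid_arrivals_support k)
  finally show "measure_pmf.expectation arrivals (\<lambda>J. real N * sup_dual k (z_start J k))
      \<le> measure_pmf.expectation arrivals (\<lambda>J. proxy_off m n K T c S g J k (z_start J k)) + e" .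
qed

lemma expected_dual_le_offline:
  assumes k: "k \<in> {1..K}"
  shows "measure_pmf.expectation arrivals (\<lambda>J. \<Sum>t\<in>epoch k. dual_value k (z_start J k) (mu_at J t) (J t))
       \<le> measure_pmf.expectation arrivals (\<lambda>J. proxy_off m n K T c S g J k (z_start J k))"
proof -
  have "measure_pmf.expectation arrivals (\<lambda>J. \<Sum>t\<in>epoch k. dual_value k (z_start J k) (mu_at J t) (J t))
      = measure_pmf.expectation arrivals (\<lambda>J. \<Sum>t\<in>epoch k. mean_dual k (z_start J k) (mu_at J t))"
    unfolding Bochner_Integration.integral_sum[OF integrable_arrivals]
    by (intro sum.cong refl expectation_dual_value[OF k]) (auto intro: mu_at_fun_upd[OF k])
  also have "\<dots> \<le> measure_pmf.expectation arrivals (\<lambda>J. real N * sup_dual k (z_start J k))"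
  proof (intro integral_mono_AE[OF integrable_arrivals integrable_arrivals], unfold AE_measure_pmf_iff, intro ballI)
    fix J assume "J \<in> set_pmf arrivals"
    then have "(\<Sum>t\<in>epoch k. mean_dual k (z_start J k) (mu_at J t)) \<le> (\<Sum>t\<in>epoch k. sup_dual k (z_start J k))"
      by (intro sum_mono mean_dual_le_sup_dual z_start_admissible valid_arrivals_support k)
    then show "(\<Sum>t\<in>epoch k. mean_dual k (z_start J k) (mu_at J t)) \<le> real N * sup_dual k (z_start J k)"
      by (simp add: card_epoch[OF k])
  qed
  also have "\<dots> \<le> measure_pmf.expectation arrivals (\<lambda>J. proxy_off m n K T c S g J k (z_start J k))"
    by (rule expected_sup_dual_le_offline[OF k])
  finally show ?thesis .
qed

theorem expected_proxy_regret_bounds: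
  assumes k: "k \<in> {1..K}"
  shows "0 \<le> expected_proxy_regret m n K T c S g mu1 eta selX selA P k"
    and "expected_proxy_regret m n K T c S g mu1 eta selX selA P k
           \<le> dual_radius / eta + real K * real m * (eta * real N / 2)"
proof -
  have regret: "expected_proxy_regret m n K T c S g mu1 eta selX selA P k
      = measure_pmf.expectation arrivals (\<lambda>J. proxy_V m n K T c g mu1 eta selX selA J k (z_start J k))
        - measure_pmf.expectation arrivals (\<lambda>J. proxy_off m n K T c S g J k (z_start J k))"
    unfolding expected_proxy_regret_def proxy_regret_def Let_def z_start_def[symmetric]
    by (rule Bochner_Integration.integral_diff[OF integrable_arrivals integrable_arrivals])
  have "measure_pmf.expectation arrivals (\<lambda>J. proxy_off m n K T c S g J k (z_start J k))
      \<le> measure_pmf.expectation arrivals (\<lambda>J. proxy_V m n K T c g mu1 eta selX selA J k (z_start J k))"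
    using proxy_off_le_proxy_V[OF valid_arrivals_support k z_start_admissible[OF valid_arrivals_support k]]
    by (intro integral_mono_AE[OF integrable_arrivals integrable_arrivals]) (simp add: AE_measure_pmf_iff)
  then show "0 \<le> expected_proxy_regret m n K T c S g mu1 eta selX selA P k" unfolding regret by simp
  have "measure_pmf.expectation arrivals (\<lambda>J. proxy_V m n K T c g mu1 eta selX selA J k (z_start J k))
      \<le> measure_pmf.expectation arrivals (\<lambda>J. (\<Sum>t\<in>epoch k. dual_value k (z_start J k) (mu_at J t) (J t))
          + (dual_radius / eta + real K * real m * (eta * real N / 2)))"
    using proxy_V_le_dual[OF valid_arrivals_support k]
    by (intro integral_mono_AE[OF integrable_arrivals integrable_arrivals]) (simp add: AE_measure_pmf_iff add.assoc)
  also have "\<dots> = measure_pmf.expectation arrivals (\<lambda>J. \<Sum>t\<in>epoch k. dual_value k (z_start J k) (mu_at J t) (J t))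
      + (dual_radius / eta + real K * real m * (eta * real N / 2))"
    by (subst Bochner_Integration.integral_add[OF integrable_arrivals integrable_arrivals]) simp
  finally show "expected_proxy_regret m n K T c S g mu1 eta selX selA P k
      \<le> dual_radius / eta + real K * real m * (eta * real N / 2)"
    using expected_dual_le_offline[OF k] unfolding regret by linarith
qed

end

theorem lemma4:
  fixes m n K :: nat and c :: "nat \<Rightarrow> nat \<Rightarrow> real" and S :: "nat \<Rightarrow> nat set"
    and P :: "nat pmf" and \<rho> :: "nat \<Rightarrow> nat \<Rightarrow> real" and g :: "nat \<Rightarrow> nat \<Rightarrow> real \<Rightarrow> real"
    and L :: real and mu1 :: "nat \<Rightarrow> nat \<Rightarrow> real" and eta :: "nat \<Rightarrow> real" and c1 c2 :: real
  assumes K_pos: "K \<ge> 1"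
    and S_sub: "\<forall>j<n. S j \<subseteq> {..<m}"
    and P_supp: "set_pmf P \<subseteq> {..<n}"
    and g_props: "\<forall>k\<in>{1..K}. \<forall>i<m. \<rho> k i \<in> {0..1} \<and> convex_on {0..1} (g k i)
                    \<and> L-lipschitz_on {0..1} (g k i) \<and> (\<forall>x\<in>{0..1}. 0 \<le> g k i x) \<and> g k i (\<rho> k i) = 0"
    and c1_pos: "0 < c1" and c12: "c1 \<le> c2"
    and eta_Theta: "\<forall>\<^sub>F T in sequentially.
                      c1 * sqrt (real K / real T) \<le> eta T \<and> eta T \<le> c2 * sqrt (real K / real T)"
  shows "\<exists>C T0. \<forall>T\<ge>T0. K dvd T \<longrightarrow>
           (\<forall>selX selA. valid_selectors m n S selX selA \<longrightarrow>
              (\<forall>k\<in>{1..K}.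
                 \<bar>expected_proxy_regret m n K T c S g mu1 (eta T) selX selA P k\<bar>
                   \<le> C * sqrt (real T / real K)))"
proof -
  obtain T1 where T1: "\<And>T. T1 \<le> T \<Longrightarrow> c1 * sqrt (real K / real T) \<le> eta T \<and> eta T \<le> c2 * sqrt (real K / real T)"
    using eta_Theta by (auto simp: eventually_sequentially)
  define B where "B = (\<Sum>k''=1..K. \<Sum>i<m. (mu1 k'' i)\<^sup>2 + (real K * L)\<^sup>2)"
  show ?thesis
  proof (intro exI[of _ "B / c1 + real K * real m * c2 / 2"] exI[of _ "max T1 1"] allI impI ballI)
    fix T selX selA k
    assume T: "max T1 1 \<le> T" and "K dvd T" and "valid_selectors m n S selX selA" and k: "k \<in> {1..K}"
    define s where "s = sqrt (real T / real K)"
    have s: "0 < s" "sqrt (real K / real T) = 1 / s" "real (T div K) = s\<^sup>2"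
      using T K_pos \<open>K dvd T\<close> by (auto simp: s_def real_sqrt_divide real_of_nat_div power_divide)
    then have eta: "c1 / s \<le> eta T" "eta T \<le> c2 / s" using T1[of T] T by auto
    interpret dgd_iid m n K T c S g L mu1 "eta T" selX selA P
      using K_pos \<open>K dvd T\<close> T S_sub g_props \<open>valid_selectors m n S selX selA\<close> P_supp
        c1_pos s eta by unfold_locales (auto intro: less_le_trans[OF divide_pos_pos])
    have "dual_radius = B" by (simp add: dual_radius_def B_def)
    then show "\<bar>expected_proxy_regret m n K T c S g mu1 (eta T) selX selA P k\<bar>
        \<le> (B / c1 + real K * real m * c2 / 2) * sqrt (real T / real K)"
      using expected_proxy_regret_bounds[OF k] step_size_tradeoff[OF _ _ c1_pos s(1) eta, of B "real K * real m"]
      unfolding s_def[symmetric] s(3) by (simp add: B_def sum_nonneg)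
  qed
qed

end
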